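(* Let $\alpha>-1$ and let $\phi(w)=aw+b$ with $a>0$ and $\mathrm{Re}(b)\ge 0$. Then $C_\phi$ is a normal operator on $\mathcal{A}^2_\alpha(\mathbb{C}_+)$ if and only if $a=1$ or $\mathrm{Re}(b)=0$.
   Context: $\mathbb{C}_+=\{z\in\mathbb{C}:\mathrm{Re}(z)>0\}$. For $\alpha>-1$, $\mathcal{A}^2_\alpha(\mathbb{C}_+)$ is the Hilbert space of analytic $f:\mathbb{C}_+\to\mathbb{C}$ with $\|f\|^2=\frac{1}{\pi}\int_{-\infty}^{\infty}\int_0^\infty |f(x+iy)|^2x^\alpha\,dx\,dy<\infty$. $C_\phi f=f\circ\phi$ is the (bounded) composition operator. *)

theory Defs
  imports "HOL-Analysis.Analysis"
begin

definition RHP :: "complex set" where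
  "RHP = {z. Re z > 0}"

text \<open>Two functions agreeing on C_+ represent
  the same element.\<close>
definition bergman_space :: "real \<Rightarrow> (complex \<Rightarrow> complex) set" where
  "bergman_space \<alpha> = {f. f holomorphic_on RHP \<and>
      set_integrable lborel RHP (\<lambda>z. (cmod (f z))\<^sup>2 * Re z powr \<alpha>)}"

definition bergman_inner :: "real \<Rightarrow> (complex \<Rightarrow> complex) \<Rightarrow> (complex \<Rightarrow> complex) \<Rightarrow> complex" where
  "bergman_inner \<alpha> f g =
     (1 / pi) * (LINT z:RHP|lborel. f z * cnj (g z) * complex_of_real (Re z powr \<alpha>))"

definition comp_op :: "(complex \<Rightarrow> complex) \<Rightarrow> (complex \<Rightarrow> complex) \<Rightarrow> (complex \<Rightarrow> complex)" where
  "comp_op \<phi> f = f \<circ> \<phi>"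

definition is_adjoint_on :: "real \<Rightarrow> ((complex \<Rightarrow> complex) \<Rightarrow> (complex \<Rightarrow> complex))
    \<Rightarrow> ((complex \<Rightarrow> complex) \<Rightarrow> (complex \<Rightarrow> complex)) \<Rightarrow> bool" where
  "is_adjoint_on \<alpha> T S \<longleftrightarrow>
     (\<forall>g\<in>bergman_space \<alpha>. S g \<in> bergman_space \<alpha>) \<and>
     (\<forall>f\<in>bergman_space \<alpha>. \<forall>g\<in>bergman_space \<alpha>.
        bergman_inner \<alpha> (T f) g = bergman_inner \<alpha> f (S g))"

definition normal_op_on :: "real \<Rightarrow> ((complex \<Rightarrow> complex) \<Rightarrow> (complex \<Rightarrow> complex)) \<Rightarrow> bool" where
  "normal_op_on \<alpha> T \<longleftrightarrow>
     (\<forall>f\<in>bergman_space \<alpha>. T f \<in> bergman_space \<alpha>) \<and>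
     (\<exists>S. is_adjoint_on \<alpha> T S \<and>
        (\<forall>f\<in>bergman_space \<alpha>. \<forall>z\<in>RHP. T (S f) z = S (T f) z))"

end

(*
  For phi(w) = a w + b the adjoint of C_phi is explicit:
  C_phi^* g (z) = a^(-2-alpha) g ((z + cnj b) / a).  Dilations and imaginary translations act on
  the space by a change of variables.  A translation by a real r > 0 is handled on vertical lines:
  for f, g holomorphic on C_+ the pairing integral f (p + iy) * cnj (g (sigma - p + iy)) dy does
  not depend on p, by Cauchy's theorem on strips applied to the holomorphic function
  z |-> f z * cnj (g (sigma - cnj z)).  With sigma = 2x + r this gives <f (. + r), g> =
  <f, g (. + r)>; with f = g it gives midpoint convexity of p |-> integral |f (p + iy)|^2 dy,
  which shows that translation maps the space into itself.

  Consequently C_phi C_phi^* f (z) = a^(-2-alpha) f (z + 2 Re b / a) and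
  C_phi^* C_phi f (z) = a^(-2-alpha) f (z + 2 Re b).  These agree when a = 1 or Re b = 0;
  otherwise they differ on f (w) = (w + 1)^(-n), and since an adjoint is unique (<h, h> = 0
  forces h = 0 on C_+) no adjoint commutes with C_phi.
*)

theory Submission
  imports Defs "HOL-Complex_Analysis.Complex_Analysis" "HOL-Probability.Sinc_Integral"
begin

section \<open>Integration on the real line and the complex plane\<close>

lemma borel_measurable_Complex [measurable]:
  "f \<in> borel_measurable M \<Longrightarrow> g \<in> borel_measurable M \<Longrightarrow> (\<lambda>x. Complex (f x) (g x)) \<in> borel_measurable M"
  unfolding Complex_eq by (intro borel_measurable_add borel_measurable_times)
    (auto intro: measurable_compose[OF _ borel_measurable_of_real])

lemma borel_measurable_cnj [measurable]:
  "f \<in> borel_measurable M \<Longrightarrow> (\<lambda>x. cnj (f x)) \<in> borel_measurable M"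
  using measurable_compose[OF _ borel_measurable_continuous_onI[of cnj]]
  by (auto intro: continuous_intros)

lemma distr_lborel_pair_Complex: "distr (lborel \<Otimes>\<^sub>M lborel) borel (\<lambda>(x,y). Complex x y) = lborel"
proof (rule lborel_eqI[symmetric])
  fix l u :: complex assume le: "\<And>b. b \<in> Basis \<Longrightarrow> l \<bullet> b \<le> u \<bullet> b"
  have [measurable]: "(\<lambda>(x,y). Complex x y) \<in> borel_measurable (lborel \<Otimes>\<^sub>M lborel)"
    by (simp add: Complex_eq case_prod_beta')
  have "(\<lambda>(x,y). Complex x y) -` box l u \<inter> space (lborel \<Otimes>\<^sub>M lborel) = {Re l<..<Re u} \<times> {Im l<..<Im u}"
    by (auto simp: in_box_complex_iff space_pair_measure)
  moreover have "Re l \<le> Re u" "Im l \<le> Im u" using le[of 1] le[of \<i>] by (auto simp: Basis_complex_def)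
  ultimately show "emeasure (distr (lborel \<Otimes>\<^sub>M lborel) borel (\<lambda>(x,y). Complex x y)) (box l u)
      = (\<Prod>b\<in>Basis. (u - l) \<bullet> b)"
    by (simp add: emeasure_distr lborel.emeasure_pair_measure_Times Basis_complex_def ennreal_mult')
qed simp

lemma nn_integral_lborel_complex:
  assumes [measurable]: "F \<in> borel_measurable borel"
  shows "(\<integral>\<^sup>+z. F z \<partial>lborel) = (\<integral>\<^sup>+x. \<integral>\<^sup>+y. F (Complex x y) \<partial>lborel \<partial>lborel)"
proof -
  have "(\<integral>\<^sup>+z. F z \<partial>lborel) = (\<integral>\<^sup>+z. F z \<partial>distr (lborel \<Otimes>\<^sub>M lborel) borel (\<lambda>(x,y). Complex x y))"
    by (simp add: distr_lborel_pair_Complex)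
  also have "\<dots> = (\<integral>\<^sup>+p. F (Complex (fst p) (snd p)) \<partial>(lborel \<Otimes>\<^sub>M lborel))"
    by (subst nn_integral_distr) (auto simp: case_prod_beta')
  also have "\<dots> = (\<integral>\<^sup>+x. \<integral>\<^sup>+y. F (Complex x y) \<partial>lborel \<partial>lborel)"
    by (subst lborel.nn_integral_fst[symmetric]) auto
  finally show ?thesis .
qed

lemma integral_lborel_complex:
  fixes h :: "complex \<Rightarrow> complex"
  assumes int: "integrable lborel h"
  shows "integrable lborel (\<lambda>x. LINT y|lborel. h (Complex x y))"
    and "integral\<^sup>L lborel h = (LINT x|lborel. LINT y|lborel. h (Complex x y))"
proof -
  have [measurable]: "h \<in> borel_measurable borel" using int by auto
  have C: "(\<lambda>p. Complex (fst p) (snd p)) \<in> measurable (lborel \<Otimes>\<^sub>M lborel) borel" by measurable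
  have "integrable (distr (lborel \<Otimes>\<^sub>M lborel) borel (\<lambda>(x,y). Complex x y)) h"
    using int by (simp add: distr_lborel_pair_Complex)
  then have pair: "integrable (lborel \<Otimes>\<^sub>M lborel) (\<lambda>p. h (Complex (fst p) (snd p)))"
    by (simp add: integrable_distr_eq[OF C] case_prod_beta')
  show "integrable lborel (\<lambda>x. LINT y|lborel. h (Complex x y))"
    using lborel_pair.integrable_fst'[OF pair] by simp
  have "integral\<^sup>L lborel h = integral\<^sup>L (distr (lborel \<Otimes>\<^sub>M lborel) borel (\<lambda>(x,y). Complex x y)) h"
    by (simp add: distr_lborel_pair_Complex)
  also have "\<dots> = integral\<^sup>L (lborel \<Otimes>\<^sub>M lborel) (\<lambda>p. h (Complex (fst p) (snd p)))"
    by (simp add: integral_distr[OF C] case_prod_beta')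
  also have "\<dots> = (LINT x|lborel. LINT y|lborel. h (Complex x y))"
    using lborel_pair.integral_fst'[OF pair] by simp
  finally show "integral\<^sup>L lborel h = (LINT x|lborel. LINT y|lborel. h (Complex x y))" .
qed

lemma nn_integral_lborel_complex_affine:
  fixes F :: "complex \<Rightarrow> ennreal" and c :: real
  assumes c: "c \<noteq> 0" and [measurable]: "F \<in> borel_measurable borel"
  shows "(\<integral>\<^sup>+z. F z \<partial>lborel) = ennreal (c\<^sup>2) * (\<integral>\<^sup>+z. F (t + c *\<^sub>R z) \<partial>lborel)"
proof -
  have "(\<integral>\<^sup>+z. F z \<partial>lborel) = (\<integral>\<^sup>+z. F z \<partial>density (distr lborel borel (\<lambda>z. t
      + c *\<^sub>R z)) (\<lambda>_. \<bar>c\<bar> ^ DIM(complex)))"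
    using lborel_affine[OF c, of t] by simp
  also have "\<dots> = (\<integral>\<^sup>+z. ennreal (\<bar>c\<bar> ^ DIM(complex)) * F z \<partial>distr lborel borel (\<lambda>z. t + c *\<^sub>R z))"
    by (subst nn_integral_density) auto
  also have "\<dots> = (\<integral>\<^sup>+z. ennreal (\<bar>c\<bar> ^ DIM(complex)) * F (t + c *\<^sub>R z) \<partial>lborel)"
    by (subst nn_integral_distr) auto
  also have "\<dots> = ennreal (c\<^sup>2) * (\<integral>\<^sup>+z. F (t + c *\<^sub>R z) \<partial>lborel)"
    by (subst nn_integral_cmult) auto
  finally show ?thesis .
qed

lemma integral_lborel_complex_affine:
  fixes F :: "complex \<Rightarrow> complex" and c :: real
  assumes c: "c \<noteq> 0" and [measurable]: "F \<in> borel_measurable borel"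
  shows "integral\<^sup>L lborel F = of_real (c\<^sup>2) * (LINT z|lborel. F (t + c *\<^sub>R z))"
proof -
  have "integral\<^sup>L lborel F = integral\<^sup>L (density (distr lborel borel (\<lambda>z. t
      + c *\<^sub>R z)) (\<lambda>_. \<bar>c\<bar> ^ DIM(complex))) F"
    using lborel_affine[OF c, of t] by simp
  also have "\<dots> = integral\<^sup>L (distr lborel borel (\<lambda>z. t + c *\<^sub>R z)) (\<lambda>z. (\<bar>c\<bar> ^ DIM(complex)) *\<^sub>R F z)"
    by (subst integral_density) auto
  also have "\<dots> = (LINT z|lborel. (\<bar>c\<bar> ^ DIM(complex)) *\<^sub>R F (t + c *\<^sub>R z))"
    by (subst integral_distr) auto
  also have "\<dots> = of_real (c\<^sup>2) * (LINT z|lborel. F (t + c *\<^sub>R z))"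
    by (simp add: scaleR_conv_of_real)
  finally show ?thesis .
qed

lemma emeasure_lborel_atLeast: "emeasure lborel {a::real..} = \<infinity>"
proof -
  have "ennreal (real n) \<le> emeasure lborel {a::real..}" for n
  proof -
    have "emeasure lborel {a..a + real n} \<le> emeasure lborel {a::real..}"
      by (intro emeasure_mono) auto
    then show ?thesis by simp
  qed
  then show ?thesis
    by (metis ennreal_Ex_less_of_nat ennreal_of_nat_eq_real_of_nat
        infinity_ennreal_def leD top.not_eq_extremum)
qed

lemma nn_integral_infinite_if_eventually_ge:
  fixes h :: "real \<Rightarrow> ennreal"
  assumes "eventually (\<lambda>y. c \<le> h y) at_top" and "c > 0"
  shows "(\<integral>\<^sup>+y. h y \<partial>lborel) = \<infinity>"
proof -
  obtain Y0 where Y0: "\<And>y. y \<ge> Y0 \<Longrightarrow> c \<le> h y"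
    using assms(1) by (auto simp: eventually_at_top_linorder)
  have "c * emeasure lborel {Y0..} \<le> (\<integral>\<^sup>+y. h y \<partial>lborel)"
    by (subst nn_integral_cmult_indicator[symmetric])
      (auto intro!: nn_integral_mono simp: indicator_def Y0)
  then show ?thesis
    using assms(2) by (simp add: emeasure_lborel_atLeast ennreal_mult_top top_unique
        split: if_split_asm)
qed

lemma tendsto_integral_symmetric_Icc:
  fixes \<phi> :: "real \<Rightarrow> 'a::euclidean_space"
  assumes int: "integrable lborel \<phi>"
  shows "((\<lambda>Y. integral {-Y..Y} \<phi>) \<longlongrightarrow> integral\<^sup>L lborel \<phi>) at_top"
proof -
  have "integral {-Y..Y} \<phi> = (LINT y|lborel. indicator {-Y..Y} y *\<^sub>R \<phi> y)" for Y
  proof -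
    have "set_integrable lborel {-Y..Y} \<phi>"
      unfolding set_integrable_def by (rule integrable_mult_indicator) (use int in auto)
    from set_borel_integral_eq_integral(2)[OF this] show ?thesis
      by (simp add: set_lebesgue_integral_def)
  qed
  moreover have "((\<lambda>Y. LINT y|lborel. indicator {-Y..Y} y *\<^sub>R \<phi> y) \<longlongrightarrow> integral\<^sup>L lborel \<phi>) at_top"
  proof (rule integral_dominated_convergence_at_top[where w="\<lambda>y. norm (\<phi> y)"])
    show "AE y in lborel. ((\<lambda>Y. indicator {-Y..Y} y *\<^sub>R \<phi> y) \<longlongrightarrow> \<phi> y) at_top"
    proof (rule AE_I2, rule tendsto_eventually)
      fix y
      show "\<forall>\<^sub>F Y in at_top. indicator {-Y..Y} y *\<^sub>R \<phi> y = \<phi> y"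
        using eventually_ge_at_top[of "\<bar>y\<bar>"] by eventually_elim (auto simp: indicator_def)
    qed
  qed (use int in \<open>auto simp: indicator_def
      intro!: borel_measurable_integrable integrable_mult_indicator\<close>)
  ultimately show ?thesis by simp
qed

lemma nn_integral_powr_Icc_finite:
  assumes "\<alpha> > -1" "r \<ge> 0"
  shows "(\<integral>\<^sup>+x. indicator {0..r} x * ennreal (x powr \<alpha>) \<partial>lborel) < \<infinity>"
  using nn_integral_has_integral_lebesgue'[OF _ has_integral_powr_from_0[OF assms]]
  by (simp add: mult.commute)

lemma nn_integral_powr_atLeast_finite:
  assumes "e < -1" "a > 0"
  shows "(\<integral>\<^sup>+x. indicator {a..} x * ennreal (x powr e) \<partial>lborel) < \<infinity>"
  using nn_integral_has_integral_lebesgue'[OF _ has_integral_powr_to_inf[OF assms]]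
  by (simp add: mult.commute)

section \<open>The weighted Bergman space\<close>

lemma open_RHP: "open RHP"
  unfolding RHP_def by (simp add: open_halfspace_Re_gt)

lemma sets_RHP [measurable]: "RHP \<in> sets borel"
  using open_RHP by simp

lemma cnj_RHP: "cnj ` RHP = RHP"
proof -
  have "z \<in> cnj ` RHP" if "z \<in> RHP" for z
    using that by (intro image_eqI[of z cnj "cnj z"]) (auto simp: RHP_def)
  then show ?thesis by (auto simp: RHP_def)
qed

lemma holomorphic_on_affine_RHP:
  assumes "f holomorphic_on RHP" "c > 0" "Re t \<ge> 0"
  shows "(\<lambda>z. f (of_real c * z + t)) holomorphic_on RHP"
proof -
  have "(f \<circ> (\<lambda>z. of_real c * z + t)) holomorphic_on RHP"
    by (rule holomorphic_on_compose_gen[OF _ assms(1)])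
       (use assms(2,3) in \<open>auto simp: RHP_def intro!: holomorphic_intros add_pos_nonneg\<close>)
  then show ?thesis
    by (simp add: comp_def)
qed

lemma bergman_space_holomorphic: "f \<in> bergman_space \<alpha> \<Longrightarrow> f holomorphic_on RHP"
  by (simp add: bergman_space_def)

(* Elements of the space are arbitrary off RHP; cutting them off there makes them Borel measurable. *)
definition zero_outside_RHP :: "(complex \<Rightarrow> complex) \<Rightarrow> complex \<Rightarrow> complex" where
  "zero_outside_RHP f z = (if z \<in> RHP then f z else 0)"

lemma borel_measurable_zero_outside_RHP:
  "f holomorphic_on RHP \<Longrightarrow> zero_outside_RHP f \<in> borel_measurable borel"
  unfolding zero_outside_RHP_def
  by (rule borel_measurable_continuous_on_if) (auto intro: holomorphic_on_imp_continuous_on)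

lemma bergman_space_iff_integrable:
  "f \<in> bergman_space \<alpha> \<longleftrightarrow>
     f holomorphic_on RHP \<and> integrable lborel (\<lambda>z. (cmod (zero_outside_RHP f z))\<^sup>2 * Re z powr \<alpha>)"
proof -
  have "(\<lambda>z. indicator RHP z *\<^sub>R ((cmod (f z))\<^sup>2 * Re z powr \<alpha>)) =
      (\<lambda>z. (cmod (zero_outside_RHP f z))\<^sup>2 * Re z powr \<alpha>)"
    by (auto simp: fun_eq_iff zero_outside_RHP_def indicator_def)
  then show ?thesis
    unfolding bergman_space_def set_integrable_def by simp
qed

lemma integrable_bergman_sqnorm:
  "f \<in> bergman_space \<alpha> \<Longrightarrow> integrable lborel (\<lambda>z. (cmod (zero_outside_RHP f z))\<^sup>2 * Re z powr \<alpha>)"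
  by (simp add: bergman_space_iff_integrable)

lemma norm_mult_le_sum_squares:
  fixes a b :: "'a::real_normed_vector"
  shows "norm a * norm b \<le> (norm a)\<^sup>2 + (norm b)\<^sup>2"
  using sum_squares_bound[of "norm a" "norm b"] mult_nonneg_nonneg[OF norm_ge_zero norm_ge_zero, of a b]
  by linarith

definition bergman_integrand :: "real \<Rightarrow> (complex \<Rightarrow> complex)
    \<Rightarrow> (complex \<Rightarrow> complex) \<Rightarrow> complex \<Rightarrow> complex" where
  "bergman_integrand \<alpha> f g z = indicator RHP z *\<^sub>R (f z * cnj (g z) * of_real (Re z powr \<alpha>))"

lemma bergman_inner_eq_integral:
  "bergman_inner \<alpha> f g = (1 / pi) * integral\<^sup>L lborel (bergman_integrand \<alpha> f g)"
  unfolding bergman_inner_def set_lebesgue_integral_def bergman_integrand_def ..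

lemma integrable_bergman_integrand:
  assumes f: "f \<in> bergman_space \<alpha>" and g: "g \<in> bergman_space \<alpha>"
  shows "integrable lborel (bergman_integrand \<alpha> f g)"
proof -
  let ?F = "zero_outside_RHP f" and ?G = "zero_outside_RHP g"
  have [measurable]: "?F \<in> borel_measurable borel" "?G \<in> borel_measurable borel"
    using borel_measurable_zero_outside_RHP f g bergman_space_holomorphic by auto
  have "bergman_integrand \<alpha> f g = (\<lambda>z. ?F z * cnj (?G z) * of_real (Re z powr \<alpha>))"
    by (auto simp: fun_eq_iff zero_outside_RHP_def indicator_def bergman_integrand_def)
  moreover have "integrable lborel (\<lambda>z. ?F z * cnj (?G z) * of_real (Re z powr \<alpha>))"
  proof (rule Bochner_Integration.integrable_bound)
    show "integrable lborel (\<lambda>z. (cmod (?F z))\<^sup>2 * Re z powr \<alpha> + (cmod (?G z))\<^sup>2 * Re z powr \<alpha>)"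
      using integrable_bergman_sqnorm[OF f] integrable_bergman_sqnorm[OF g] by simp
    show "AE z in lborel. norm (?F z * cnj (?G z) * of_real (Re z powr \<alpha>)) \<le>
        norm ((cmod (?F z))\<^sup>2 * Re z powr \<alpha> + (cmod (?G z))\<^sup>2 * Re z powr \<alpha>)"
    proof (rule AE_I2)
      fix z
      from norm_mult_le_sum_squares[of "?F z" "?G z"]
      show "norm (?F z * cnj (?G z) * of_real (Re z powr \<alpha>)) \<le>
          norm ((cmod (?F z))\<^sup>2 * Re z powr \<alpha> + (cmod (?G z))\<^sup>2 * Re z powr \<alpha>)"
        by (simp add: norm_mult mult_right_mono flip: distrib_right)
    qed
  qed measurable
  ultimately show ?thesis by simp
qed

lemma bergman_space_scale:
  assumes f: "f \<in> bergman_space \<alpha>"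
  shows "(\<lambda>z. c * f z) \<in> bergman_space \<alpha>"
proof -
  have "integrable lborel (\<lambda>z. (cmod c)\<^sup>2 * (indicator RHP z *\<^sub>R ((cmod (f z))\<^sup>2 * Re z powr \<alpha>)))"
    using f unfolding bergman_space_def set_integrable_def by auto
  then have "set_integrable lborel RHP (\<lambda>z. (cmod (c * f z))\<^sup>2 * Re z powr \<alpha>)"
    unfolding set_integrable_def by (simp add: norm_mult power_mult_distrib mult_ac)
  moreover have "(\<lambda>z. c * f z) holomorphic_on RHP"
    using bergman_space_holomorphic[OF f] by (auto intro!: holomorphic_intros)
  ultimately show ?thesis
    unfolding bergman_space_def by auto
qed

lemma bergman_inner_scale_right:
  "bergman_inner \<alpha> f (\<lambda>z. c * h z) = cnj c * bergman_inner \<alpha> f h"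
proof -
  have "bergman_integrand \<alpha> f (\<lambda>z. c * h z) = (\<lambda>z. cnj c * bergman_integrand \<alpha> f h z)"
    by (auto simp: fun_eq_iff bergman_integrand_def)
  then show ?thesis
    unfolding bergman_inner_eq_integral by simp
qed

lemma bergman_space_diff:
  assumes f: "f \<in> bergman_space \<alpha>" and g: "g \<in> bergman_space \<alpha>"
  shows "(\<lambda>z. f z - g z) \<in> bergman_space \<alpha>"
proof -
  let ?F = "zero_outside_RHP f" and ?G = "zero_outside_RHP g"
  have [measurable]: "?F \<in> borel_measurable borel" "?G \<in> borel_measurable borel"
    using borel_measurable_zero_outside_RHP f g bergman_space_holomorphic by auto
  have "integrable lborel (\<lambda>z. (cmod (?F z - ?G z))\<^sup>2 * Re z powr \<alpha>)"
  proof (rule Bochner_Integration.integrable_bound)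
    show "integrable lborel (\<lambda>z. 2 * ((cmod (?F z))\<^sup>2 * Re z powr \<alpha>)
        + 2 * ((cmod (?G z))\<^sup>2 * Re z powr \<alpha>))"
      using integrable_bergman_sqnorm[OF f] integrable_bergman_sqnorm[OF g] by simp
    show "AE z in lborel. norm ((cmod (?F z - ?G z))\<^sup>2 * Re z powr \<alpha>) \<le>
        norm (2 * ((cmod (?F z))\<^sup>2 * Re z powr \<alpha>) + 2 * ((cmod (?G z))\<^sup>2 * Re z powr \<alpha>))"
    proof (rule AE_I2)
      fix z
      have "(cmod (?F z - ?G z))\<^sup>2 \<le> (cmod (?F z) + cmod (?G z))\<^sup>2"
        by (intro power_mono norm_triangle_ineq4) auto
      also have "\<dots> \<le> 2 * (cmod (?F z))\<^sup>2 + 2 * (cmod (?G z))\<^sup>2"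
        using sum_squares_bound[of "cmod (?F z)" "cmod (?G z)"] by (simp add: power2_sum)
      finally show "norm ((cmod (?F z - ?G z))\<^sup>2 * Re z powr \<alpha>) \<le>
          norm (2 * ((cmod (?F z))\<^sup>2 * Re z powr \<alpha>) + 2 * ((cmod (?G z))\<^sup>2 * Re z powr \<alpha>))"
        by (simp add: mult_right_mono flip: distrib_right mult.assoc)
    qed
  qed measurable
  moreover have "zero_outside_RHP (\<lambda>z. f z - g z) = (\<lambda>z. ?F z - ?G z)"
    by (auto simp: fun_eq_iff zero_outside_RHP_def)
  moreover have "(\<lambda>z. f z - g z) holomorphic_on RHP"
    using f g bergman_space_holomorphic by (auto intro!: holomorphic_intros)
  ultimately show ?thesis
    by (simp add: bergman_space_iff_integrable)
qed

lemma bergman_inner_diff_right: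
  assumes f: "f \<in> bergman_space \<alpha>" and g: "g \<in> bergman_space \<alpha>" and h: "h \<in> bergman_space \<alpha>"
  shows "bergman_inner \<alpha> f (\<lambda>z. g z - h z) = bergman_inner \<alpha> f g - bergman_inner \<alpha> f h"
proof -
  have "bergman_integrand \<alpha> f (\<lambda>z. g z - h z)
      = (\<lambda>z. bergman_integrand \<alpha> f g z - bergman_integrand \<alpha> f h z)"
    by (auto simp: fun_eq_iff bergman_integrand_def algebra_simps)
  then show ?thesis
    using integrable_bergman_integrand[OF f g] integrable_bergman_integrand[OF f h]
    unfolding bergman_inner_eq_integral by (simp add: right_diff_distrib)
qed

section \<open>Square norms on vertical lines\<close>

definition line_sqnorm :: "(complex \<Rightarrow> complex) \<Rightarrow> real \<Rightarrow> ennreal" where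
  "line_sqnorm f x = (\<integral>\<^sup>+y. ennreal ((cmod (zero_outside_RHP f (Complex x y)))\<^sup>2) \<partial>lborel)"

lemma borel_measurable_line_sqnorm:
  assumes "f holomorphic_on RHP"
  shows "line_sqnorm f \<in> borel_measurable borel"
proof -
  have [measurable]: "zero_outside_RHP f \<in> borel_measurable borel"
    by (rule borel_measurable_zero_outside_RHP[OF assms])
  have "(\<lambda>(x,y). ennreal ((cmod (zero_outside_RHP f (Complex x y)))\<^sup>2))
      \<in> borel_measurable (lborel \<Otimes>\<^sub>M lborel)"
    by measurable
  from lborel.borel_measurable_nn_integral_fst[OF this] show ?thesis
    unfolding line_sqnorm_def by simp
qed

lemma line_sqnorm_nonpos: "x \<le> 0 \<Longrightarrow> line_sqnorm f x = 0"
  by (simp add: line_sqnorm_def zero_outside_RHP_def RHP_def)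

lemma line_sqnorm_pos:
  "x > 0 \<Longrightarrow> line_sqnorm f x = (\<integral>\<^sup>+y. ennreal ((cmod (f (Complex x y)))\<^sup>2) \<partial>lborel)"
  by (simp add: line_sqnorm_def zero_outside_RHP_def RHP_def)

lemma bergman_space_iff_line_sqnorm:
  assumes "f holomorphic_on RHP"
  shows "f \<in> bergman_space \<alpha> \<longleftrightarrow> (\<integral>\<^sup>+x. ennreal (x powr \<alpha>) * line_sqnorm f x \<partial>lborel) < \<infinity>"
proof -
  have [measurable]: "zero_outside_RHP f \<in> borel_measurable borel"
    by (rule borel_measurable_zero_outside_RHP[OF assms])
  have "f \<in> bergman_space \<alpha> \<longleftrightarrow> integrable lborel (\<lambda>z. (cmod (zero_outside_RHP f z))\<^sup>2 * Re z powr \<alpha>)"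
    using assms by (simp add: bergman_space_iff_integrable)
  also have "\<dots> \<longleftrightarrow> (\<integral>\<^sup>+z. ennreal ((cmod (zero_outside_RHP f z))\<^sup>2 * Re z powr \<alpha>) \<partial>lborel) < \<infinity>"
    by (subst integrable_iff_bounded) auto
  also have "(\<integral>\<^sup>+z. ennreal ((cmod (zero_outside_RHP f z))\<^sup>2 * Re z powr \<alpha>) \<partial>lborel) =
      (\<integral>\<^sup>+x. \<integral>\<^sup>+y. ennreal (x powr \<alpha>) *
          ennreal ((cmod (zero_outside_RHP f (Complex x y)))\<^sup>2) \<partial>lborel \<partial>lborel)"
    by (subst nn_integral_lborel_complex) (auto simp: ennreal_mult' mult.commute)
  also have "\<dots> = (\<integral>\<^sup>+x. ennreal (x powr \<alpha>) * line_sqnorm f x \<partial>lborel)"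
    unfolding line_sqnorm_def by (simp add: nn_integral_cmult)
  finally show ?thesis .
qed

lemma nn_integral_weighted_line_sqnorm_finite:
  "f \<in> bergman_space \<alpha> \<Longrightarrow> (\<integral>\<^sup>+x. ennreal (x powr \<alpha>) * line_sqnorm f x \<partial>lborel) < \<infinity>"
  using bergman_space_iff_line_sqnorm bergman_space_holomorphic by blast

lemma AE_line_sqnorm_finite:
  assumes "f \<in> bergman_space \<alpha>"
  shows "AE x in lborel. x > 0 \<longrightarrow> line_sqnorm f x < \<infinity>"
proof -
  have "AE x in lborel. ennreal (x powr \<alpha>) * line_sqnorm f x \<noteq> \<infinity>"
    using borel_measurable_line_sqnorm[OF bergman_space_holomorphic[OF assms]]
      nn_integral_weighted_line_sqnorm_finite[OF assms]
    by (intro nn_integral_PInf_AE) auto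
  then show ?thesis
    by eventually_elim (auto simp: ennreal_mult_eq_top_iff top.not_eq_extremum)
qed

lemma nn_integral_line_sqnorm_interval_finite:
  assumes f: "f \<in> bergman_space \<alpha>" and a: "0 < a"
  shows "(\<integral>\<^sup>+x. indicator {a..b} x * line_sqnorm f x \<partial>lborel) < \<infinity>"
proof -
  define m where "m = (if \<alpha> \<ge> 0 then a powr \<alpha> else b powr \<alpha>)"
  have "indicator {a..b} x * line_sqnorm f x
      \<le> ennreal (1 / m) * (ennreal (x powr \<alpha>) * line_sqnorm f x)" for x
  proof (cases "x \<in> {a..b}")
    case True
    then have "m \<le> x powr \<alpha>" "m > 0"
      using a by (auto simp: m_def intro: powr_mono2 powr_mono2')
    then have "1 \<le> ennreal (1 / m) * ennreal (x powr \<alpha>)"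
      by (simp add: ennreal_mult[symmetric] ennreal_1[symmetric] del: ennreal_1)
    then have "1 * line_sqnorm f x \<le> ennreal (1 / m) * ennreal (x powr \<alpha>) * line_sqnorm f x"
      by (intro mult_right_mono) auto
    then show ?thesis
      using True by (simp add: mult.assoc)
  qed simp
  then have "(\<integral>\<^sup>+x. indicator {a..b} x * line_sqnorm f x \<partial>lborel) \<le>
      ennreal (1 / m) * (\<integral>\<^sup>+x. ennreal (x powr \<alpha>) * line_sqnorm f x \<partial>lborel)"
    using borel_measurable_line_sqnorm[OF bergman_space_holomorphic[OF f]]
    by (subst nn_integral_cmult[symmetric]) (auto intro: nn_integral_mono)
  also have "\<dots> < \<infinity>"
    using nn_integral_weighted_line_sqnorm_finite[OF f] by (simp add: ennreal_mult_less_top)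
  finally show ?thesis .
qed

definition line_pairing :: "(complex \<Rightarrow> complex) \<Rightarrow> (complex \<Rightarrow> complex) \<Rightarrow> real \<Rightarrow> real \<Rightarrow> complex" where
  "line_pairing f g p q = (LINT y|lborel. f (Complex p y) * cnj (g (Complex q y)))"

lemma line_pairing_integrable_bound:
  assumes hf: "f holomorphic_on RHP" and hg: "g holomorphic_on RHP"
    and p: "p > 0" and q: "q > 0" and fp: "line_sqnorm f p < \<infinity>" and gq: "line_sqnorm g q < \<infinity>"
  shows "integrable lborel (\<lambda>y. f (Complex p y) * cnj (g (Complex q y)))"
    and "2 * ennreal (cmod (line_pairing f g p q)) \<le> line_sqnorm f p + line_sqnorm g q"
proof -
  have [measurable]: "zero_outside_RHP f \<in> borel_measurable borel" "zero_outside_RHP g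
      \<in> borel_measurable borel"
    using borel_measurable_zero_outside_RHP hf hg by auto
  define F where "F y = zero_outside_RHP f (Complex p y)" for y
  define G where "G y = zero_outside_RHP g (Complex q y)" for y
  have [measurable]: "F \<in> borel_measurable borel" "G \<in> borel_measurable borel"
    unfolding F_def G_def by measurable
  have FG: "f (Complex p y) * cnj (g (Complex q y)) = F y * cnj (G y)" for y
    using p q by (simp add: F_def G_def zero_outside_RHP_def RHP_def)
  have "2 * ennreal (norm (F y * cnj (G y))) \<le> ennreal ((cmod (F y))\<^sup>2)
      + ennreal ((cmod (G y))\<^sup>2)" for y
  proof -
    have "2 * (cmod (F y) * cmod (G y)) \<le> (cmod (F y))\<^sup>2 + (cmod (G y))\<^sup>2"
      using sum_squares_bound[of "cmod (F y)" "cmod (G y)"] by (simp add: mult.assoc)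
    then have "ennreal (2 * (cmod (F y) * cmod (G y))) \<le> ennreal ((cmod (F y))\<^sup>2 + (cmod (G y))\<^sup>2)"
      by (rule ennreal_leI)
    then show ?thesis
      by (simp add: norm_mult ennreal_mult ennreal_plus[symmetric] del: ennreal_plus)
  qed
  then have "(\<integral>\<^sup>+y. 2 * ennreal (norm (F y * cnj (G y))) \<partial>lborel) \<le>
      (\<integral>\<^sup>+y. ennreal ((cmod (F y))\<^sup>2) + ennreal ((cmod (G y))\<^sup>2) \<partial>lborel)"
    by (intro nn_integral_mono)
  also have "\<dots> = line_sqnorm f p + line_sqnorm g q"
    unfolding line_sqnorm_def F_def G_def by (rule nn_integral_add) auto
  finally have le: "2 * (\<integral>\<^sup>+y. ennreal (norm (F y * cnj (G y))) \<partial>lborel) \<le> line_sqnorm f p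
      + line_sqnorm g q"
    by (subst (asm) nn_integral_cmult) auto
  also have "\<dots> < \<infinity>" using fp gq by simp
  finally have "(\<integral>\<^sup>+y. ennreal (norm (F y * cnj (G y))) \<partial>lborel) < \<infinity>"
    by (auto simp: ennreal_mult_less_top top.not_eq_extremum)
  then show int: "integrable lborel (\<lambda>y. f (Complex p y) * cnj (g (Complex q y)))"
    unfolding FG by (subst integrable_iff_bounded) auto
  have "2 * ennreal (cmod (line_pairing f g p q))
      \<le> 2 * (\<integral>\<^sup>+y. ennreal (norm (F y * cnj (G y))) \<partial>lborel)"
    unfolding line_pairing_def FG using int[unfolded FG]
    by (intro mult_left_mono integral_norm_bound_ennreal) auto
  with le show "2 * ennreal (cmod (line_pairing f g p q)) \<le> line_sqnorm f p + line_sqnorm g q"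
    by order
qed

lemma line_pairing_self:
  assumes hf: "f holomorphic_on RHP" and s: "s > 0" and fs: "line_sqnorm f s < \<infinity>"
  shows "ennreal (cmod (line_pairing f f s s)) = line_sqnorm f s"
proof -
  have [measurable]: "zero_outside_RHP f \<in> borel_measurable borel"
    by (rule borel_measurable_zero_outside_RHP[OF hf])
  have sq: "f (Complex s y) * cnj (f (Complex s y))
      = of_real ((cmod (zero_outside_RHP f (Complex s y)))\<^sup>2)" for y
    unfolding complex_norm_square using s by (simp add: zero_outside_RHP_def RHP_def)
  have "line_pairing f f s s = of_real (LINT y|lborel. (cmod (zero_outside_RHP f (Complex s y)))\<^sup>2)"
    unfolding line_pairing_def sq by (rule integral_complex_of_real)
  also have "(LINT y|lborel. (cmod (zero_outside_RHP f (Complex s y)))\<^sup>2) = enn2real (line_sqnorm f s)"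
    unfolding line_sqnorm_def by (rule integral_eq_nn_integral) auto
  finally show ?thesis using fs by (simp add: less_top[symmetric])
qed

section \<open>Cauchy's theorem on vertical strips\<close>

lemma has_contour_integral_linepath_same_Im_iff:
  assumes "Im z = c" "Im z' = c" "Re z = a" "Re z' = b" "a < b"
  shows "(f has_contour_integral I) (linepath z z') \<longleftrightarrow>
           ((\<lambda>x. f (Complex x c)) has_integral I) {a..b}"
proof -
  have "(f has_contour_integral I) (linepath z z') \<longleftrightarrow>
          ((\<lambda>x. f (linepath z z' x) * (z' - z)) has_integral I) {0..1}"
    by (subst has_contour_integral_linepath) simp_all
  also have "\<dots> \<longleftrightarrow> ((\<lambda>x. f (Complex (a + (b - a) * x) c) * of_real (b - a)) has_integral I) {0..1}"
    using assms
    by (intro has_integral_cong arg_cong2[of _ _ _ _ "(*)"] arg_cong[of _ _ f])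
       (auto simp: linepath_def complex_eq_iff algebra_simps)
  also have "{0..1} = (\<lambda>x. x / (b - a)) ` {0..b-a}"
    using assms by simp
  also have "((\<lambda>x. f (Complex (a + (b - a) * x) c) * of_real (b - a)) has_integral I) \<dots> \<longleftrightarrow>
             ((\<lambda>x. f (Complex (a + x) c) * of_real (b - a)) has_integral ((b - a) *\<^sub>R I)) {0..b-a}"
    by (subst has_integral_stretch_real_iff) (use assms in simp_all)
  also have "\<dots> \<longleftrightarrow> ((\<lambda>x. of_real (b - a) * f (Complex x c)) has_integral (b - a) *\<^sub>R I) {a..b}"
    by (subst has_integral_shift_real_ivl_iff[where c = "-a"]) (simp_all add: mult_ac)
  also have "\<dots> \<longleftrightarrow> ((\<lambda>x. f (Complex x c)) has_integral I) {a..b}"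
    by (subst has_integral_mult_right_iff) (use assms in \<open>auto simp: scaleR_conv_of_real\<close>)
  finally show ?thesis .
qed

lemma Cauchy_theorem_rectangle_sides:
  fixes H :: "complex \<Rightarrow> complex"
  assumes holH: "H holomorphic_on cbox (Complex p1 (-Y)) (Complex p2 Y)" and p: "p1 < p2" and Y: "0 < Y"
  shows "\<i> * (integral {-Y..Y} (\<lambda>y. H (Complex p2 y)) - integral {-Y..Y} (\<lambda>y. H (Complex p1 y)))
       = integral {p1..p2} (\<lambda>x. H (Complex x Y)) - integral {p1..p2} (\<lambda>x. H (Complex x (-Y)))"
proof -
  define R where "R = cbox (Complex p1 (-Y)) (Complex p2 Y)"
  have inR: "Complex x y \<in> R \<longleftrightarrow> p1 \<le> x \<and> x \<le> p2 \<and> -Y \<le> y \<and> y \<le> Y" for x y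
    by (auto simp: R_def in_cbox_complex_iff)
  have contH: "continuous_on R H"
    using holH holomorphic_on_imp_continuous_on R_def by blast
  define V where "V s = integral {-Y..Y} (\<lambda>y. H (Complex s y))" for s
  define B where "B t = integral {p1..p2} (\<lambda>x. H (Complex x t))" for t
  have horizontal: "(H has_contour_integral B t) (linepath (Complex p1 t) (Complex p2 t))"
    if "-Y \<le> t" "t \<le> Y" for t
  proof -
    have "continuous_on {p1..p2} (\<lambda>x. H (Complex x t))"
      by (rule continuous_on_compose2[OF contH]) (auto intro!: continuous_intros simp: inR that)
    then show ?thesis
      unfolding B_def using p
      by (subst has_contour_integral_linepath_same_Im_iff[where c=t and a=p1 and b=p2])
         (auto intro: integrable_continuous_interval integrable_integral)
  qed
  have vertical: "(H has_contour_integral \<i> * V s) (linepath (Complex s (-Y)) (Complex s Y))"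
    if "p1 \<le> s" "s \<le> p2" for s
  proof -
    have "continuous_on {-Y..Y} (\<lambda>y. H (Complex s y))"
      by (rule continuous_on_compose2[OF contH]) (auto intro!: continuous_intros simp: inR that)
    then have "((\<lambda>y. H (Complex s y)) has_integral (-\<i> * (\<i> * V s))) {-Y..Y}"
      unfolding V_def by (simp add: integrable_continuous_interval integrable_integral)
    then show ?thesis
      using Y by (subst has_contour_integral_linepath_same_Re_iff[where c=s and a="-Y" and b=Y]) auto
  qed
  have "rectpath (Complex p1 (-Y)) (Complex p2 Y) =
      linepath (Complex p1 (-Y)) (Complex p2 (-Y)) +++ linepath (Complex p2 (-Y)) (Complex p2 Y) +++
      linepath (Complex p2 Y) (Complex p1 Y) +++ linepath (Complex p1 Y) (Complex p1 (-Y))"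
    by (simp add: rectpath_def Let_def)
  moreover have "(H has_contour_integral (B (-Y) + (\<i> * V p2 + (- B Y + - (\<i> * V p1)))))
      (linepath (Complex p1 (-Y)) (Complex p2 (-Y)) +++ linepath (Complex p2 (-Y)) (Complex p2 Y) +++
       linepath (Complex p2 Y) (Complex p1 Y) +++ linepath (Complex p1 Y) (Complex p1 (-Y)))"
    using p Y
    by (intro has_contour_integral_join horizontal vertical has_contour_integral_reverse_linepath) auto
  ultimately have "(H has_contour_integral (B (-Y) + (\<i> * V p2 + (- B Y + - (\<i> * V p1)))))
      (rectpath (Complex p1 (-Y)) (Complex p2 Y))"
    by simp
  moreover have "(H has_contour_integral 0) (rectpath (Complex p1 (-Y)) (Complex p2 Y))"
    by (rule Cauchy_theorem_convex_simple[OF holH])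
       (use p Y path_image_rectpath_subset_cbox[of "Complex p1 (-Y)" "Complex p2 Y"] in auto)
  ultimately have "B (-Y) + (\<i> * V p2 + (- B Y + - (\<i> * V p1))) = 0"
    using has_contour_integral_unique by blast
  then show ?thesis
    unfolding V_def B_def by (simp add: algebra_simps)
qed

lemma closed_vertical_strip: "closed {z. p1 \<le> Re z \<and> Re z \<le> p2}"
  using closed_Int[OF closed_halfspace_Re_ge[of p1] closed_halfspace_Re_le[of p2]]
  by (simp add: Collect_conj_eq)

lemma norm_diff_vertical_integrals_le:
  fixes H :: "complex \<Rightarrow> complex"
  assumes holH: "H holomorphic_on {z. p1 \<le> Re z \<and> Re z \<le> p2}" and p: "p1 < p2" and Y: "0 < Y"
  shows "ennreal (norm (integral {-Y..Y} (\<lambda>y. H (Complex p2 y))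
      - integral {-Y..Y} (\<lambda>y. H (Complex p1 y))))
    \<le> (\<integral>\<^sup>+x. ennreal (indicator {p1..p2} x * cmod (H (Complex x Y))) \<partial>lborel)
      + (\<integral>\<^sup>+x. ennreal (indicator {p1..p2} x * cmod (H (Complex x (-Y)))) \<partial>lborel)"
proof -
  define B where "B t = integral {p1..p2} (\<lambda>x. H (Complex x t))" for t
  have B_le: "ennreal (norm (B t))
      \<le> (\<integral>\<^sup>+x. ennreal (indicator {p1..p2} x * cmod (H (Complex x t))) \<partial>lborel)" for t
  proof -
    have "continuous_on {p1..p2} (\<lambda>x. H (Complex x t))"
      using holomorphic_on_imp_continuous_on[OF holH]
      by (rule continuous_on_compose2) (auto intro!: continuous_intros)
    then have si: "set_integrable lborel {p1..p2} (\<lambda>x. H (Complex x t))"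
      unfolding set_integrable_def by (intro borel_integrable_compact) auto
    have "B t = (LINT x:{p1..p2}|lborel. H (Complex x t))"
      using set_borel_integral_eq_integral(2)[OF si] by (simp add: B_def)
    also have "ennreal (norm \<dots>) \<le> (\<integral>\<^sup>+x. norm (indicator {p1..p2} x *\<^sub>R H (Complex x t)) \<partial>lborel)"
      using integral_norm_bound_ennreal[OF si[unfolded set_integrable_def]]
      unfolding set_lebesgue_integral_def .
    also have "\<dots> = (\<integral>\<^sup>+x. ennreal (indicator {p1..p2} x * cmod (H (Complex x t))) \<partial>lborel)"
      by (intro nn_integral_cong) (auto simp: indicator_def)
    finally show ?thesis .
  qed
  have "H holomorphic_on cbox (Complex p1 (-Y)) (Complex p2 Y)"
    by (rule holomorphic_on_subset[OF holH]) (auto simp: in_cbox_complex_iff)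
  from Cauchy_theorem_rectangle_sides[OF this p Y]
  have "norm (integral {-Y..Y} (\<lambda>y. H (Complex p2 y)) - integral {-Y..Y} (\<lambda>y. H (Complex p1 y)))
      = norm (B Y - B (-Y))"
    unfolding B_def by (metis mult_cancel_right1 norm_ii norm_mult)
  also have "\<dots> \<le> norm (B Y) + norm (B (-Y))"
    by (rule norm_triangle_ineq4)
  finally have "ennreal (norm (integral {-Y..Y} (\<lambda>y. H (Complex p2 y))
      - integral {-Y..Y} (\<lambda>y. H (Complex p1 y))))
      \<le> ennreal (norm (B Y)) + ennreal (norm (B (-Y)))"
    by (simp add: ennreal_plus[symmetric] del: ennreal_plus)
  then show ?thesis
    using add_mono[OF B_le B_le] by (rule order.trans)
qed

lemma borel_measurable_nn_integral_strip_norm: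
  fixes H :: "complex \<Rightarrow> complex"
  assumes "continuous_on {z. p1 \<le> Re z \<and> Re z \<le> p2} H"
  shows "(\<lambda>y. \<integral>\<^sup>+x. ennreal (indicator {p1..p2} x * cmod (H (Complex x y))) \<partial>lborel)
      \<in> borel_measurable borel"
proof -
  define S where "S = {z. p1 \<le> Re z \<and> Re z \<le> p2}"
  have "(\<lambda>z. indicator S z *\<^sub>R norm (H z)) \<in> borel_measurable borel"
    using assms closed_vertical_strip
    by (intro borel_measurable_continuous_on_indicator) (auto simp: S_def intro: continuous_on_norm)
  then have [measurable]: "(\<lambda>z. indicator S z * norm (H z)) \<in> borel_measurable borel"
    by simp
  have "indicator {p1..p2} x = (indicator S (Complex x y) :: real)" for x y
    by (simp add: S_def indicator_def)
  then have "(\<lambda>y. \<integral>\<^sup>+x. ennreal (indicator {p1..p2} x * cmod (H (Complex x y))) \<partial>lborel)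
      = (\<lambda>y. \<integral>\<^sup>+x. ennreal (indicator S (Complex x y) * cmod (H (Complex x y))) \<partial>lborel)"
    by simp
  also have "\<dots> \<in> borel_measurable borel"
    using lborel.borel_measurable_nn_integral_fst[of "\<lambda>(y, x).
        ennreal (indicator S (Complex x y) * cmod (H (Complex x y)))"]
    by simp
  finally show ?thesis .
qed

(* By Cauchy's theorem on rectangles, the line integrals truncated to [-Y, Y] differ by at most
  h Y + h (-Y), where h y is the integral of |H| over the horizontal segment at height y.  As h is
  integrable, the difference of the full line integrals must vanish. *)
lemma vertical_line_integrals_eq_strip:
  fixes H :: "complex \<Rightarrow> complex"
  assumes holH: "H holomorphic_on {z. p1 \<le> Re z \<and> Re z \<le> p2}" and p: "p1 < p2"
    and int1: "integrable lborel (\<lambda>y. H (Complex p1 y))"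
    and int2: "integrable lborel (\<lambda>y. H (Complex p2 y))"
    and fin: "(\<integral>\<^sup>+y. \<integral>\<^sup>+x. ennreal (indicator {p1..p2} x * cmod (H (Complex x y))) \<partial>lborel \<partial>lborel) < \<infinity>"
  shows "(LINT y|lborel. H (Complex p1 y)) = (LINT y|lborel. H (Complex p2 y))"
proof -
  define h where "h y = (\<integral>\<^sup>+x. ennreal (indicator {p1..p2} x * cmod (H (Complex x y))) \<partial>lborel)" for y
  have h_meas [measurable]: "h \<in> borel_measurable borel"
    unfolding h_def[abs_def]
    by (rule borel_measurable_nn_integral_strip_norm[OF holomorphic_on_imp_continuous_on[OF holH]])
  have "(\<integral>\<^sup>+y. h y + h (-y) \<partial>lborel) = (\<integral>\<^sup>+y. h y \<partial>lborel) + (\<integral>\<^sup>+y. h (-y) \<partial>lborel)"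
    by (rule nn_integral_add) auto
  also have "(\<integral>\<^sup>+y. h (-y) \<partial>lborel) = (\<integral>\<^sup>+y. h y \<partial>lborel)"
    using nn_integral_real_affine[OF h_meas, of "-1" 0] by simp
  finally have fin_sym: "(\<integral>\<^sup>+y. h y + h (-y) \<partial>lborel) < \<infinity>"
    using fin by (simp add: h_def)
  define D where "D = (LINT y|lborel. H (Complex p2 y)) - (LINT y|lborel. H (Complex p1 y))"
  have "D = 0"
  proof (rule ccontr)
    assume "D \<noteq> 0"
    then have D: "norm D > 0" by simp
    have "((\<lambda>Y. integral {-Y..Y} (\<lambda>y. H (Complex p2 y))
        - integral {-Y..Y} (\<lambda>y. H (Complex p1 y))) \<longlongrightarrow> D) at_top"
      unfolding D_def by (intro tendsto_diff tendsto_integral_symmetric_Icc int1 int2)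
    then have "\<forall>\<^sub>F Y in at_top. norm D / 2 <
        norm (integral {-Y..Y} (\<lambda>y. H (Complex p2 y)) - integral {-Y..Y} (\<lambda>y. H (Complex p1 y)))"
      by (rule order_tendstoD(1)[OF tendsto_norm]) (use D in simp)
    then have "\<forall>\<^sub>F Y in at_top. ennreal (norm D / 2) \<le> h Y + h (-Y)"
      using eventually_gt_at_top[of 0]
    proof eventually_elim
      case (elim Y)
      then have "ennreal (norm D / 2)
          \<le> ennreal (norm (integral {-Y..Y} (\<lambda>y. H (Complex p2 y)) - integral {-Y..Y} (\<lambda>y. H (Complex p1 y))))"
        by (intro ennreal_leI) simp
      also have "\<dots> \<le> h Y + h (-Y)"
        unfolding h_def using elim by (intro norm_diff_vertical_integrals_le[OF holH p]) simp
      finally show ?case .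
    qed
    then have "(\<integral>\<^sup>+y. h y + h (-y) \<partial>lborel) = \<infinity>"
      by (rule nn_integral_infinite_if_eventually_ge) (use D in simp)
    with fin_sym show False by simp
  qed
  then show ?thesis
    by (simp add: D_def)
qed

lemma nn_integral_strip_pairing_finite:
  assumes f: "f \<in> bergman_space \<alpha>" and g: "g \<in> bergman_space \<alpha>" and p: "0 < p1" "p2 < \<sigma>"
  shows "(\<integral>\<^sup>+y. \<integral>\<^sup>+x. ennreal (indicator {p1..p2} x * cmod (f (Complex x y)
      * cnj (g (Complex (\<sigma> - x) y))))
           \<partial>lborel \<partial>lborel) < \<infinity>"
proof -
  have hf: "f holomorphic_on RHP" and hg: "g holomorphic_on RHP"
    using f g bergman_space_holomorphic by auto
  have [measurable]: "zero_outside_RHP f \<in> borel_measurable borel" "zero_outside_RHP g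
      \<in> borel_measurable borel"
    "line_sqnorm f \<in> borel_measurable borel" "line_sqnorm g \<in> borel_measurable borel"
    using borel_measurable_zero_outside_RHP borel_measurable_line_sqnorm hf hg by auto
  define F where "F x y = indicator {p1..p2} x *
      ennreal ((cmod (zero_outside_RHP f (Complex x y)))\<^sup>2)" for x y
  define G where "G x y = indicator {p1..p2} x *
      ennreal ((cmod (zero_outside_RHP g (Complex (\<sigma> - x) y)))\<^sup>2)" for x y
  have pointwise: "ennreal (indicator {p1..p2} x * cmod (f (Complex x y) * cnj (g (Complex (\<sigma> - x) y))))
      \<le> F x y + G x y" for x y
  proof (cases "x \<in> {p1..p2}")
    case True
    then have e: "zero_outside_RHP f (Complex x y) = f (Complex x y)"
      "zero_outside_RHP g (Complex (\<sigma> - x) y) = g (Complex (\<sigma> - x) y)"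
      using p by (auto simp: zero_outside_RHP_def RHP_def)
    from norm_mult_le_sum_squares[of "f (Complex x y)" "g (Complex (\<sigma> - x) y)"]
    have "ennreal (cmod (f (Complex x y)) * cmod (g (Complex (\<sigma> - x) y)))
        \<le> ennreal ((cmod (f (Complex x y)))\<^sup>2 + (cmod (g (Complex (\<sigma> - x) y)))\<^sup>2)"
      by (rule ennreal_leI)
    then show ?thesis
      using True by (simp add: F_def G_def e norm_mult ennreal_plus[symmetric] del: ennreal_plus)
  qed (simp add: F_def G_def)
  have reflect: "(\<integral>\<^sup>+x. indicator {p1..p2} x * line_sqnorm g (\<sigma> - x) \<partial>lborel)
      = (\<integral>\<^sup>+x. indicator {\<sigma> - p2..\<sigma> - p1} x * line_sqnorm g x \<partial>lborel)"
    using nn_integral_real_affine[of "\<lambda>x. indicator {\<sigma> - p2..\<sigma> - p1} x * line_sqnorm g x" "-1" \<sigma>]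
    by (simp add: indicator_def conj_commute)
  have "(\<integral>\<^sup>+y. \<integral>\<^sup>+x. ennreal (indicator {p1..p2} x * cmod (f (Complex x y)
      * cnj (g (Complex (\<sigma> - x) y))))
      \<partial>lborel \<partial>lborel) \<le> (\<integral>\<^sup>+y. \<integral>\<^sup>+x. F x y + G x y \<partial>lborel \<partial>lborel)"
    by (intro nn_integral_mono pointwise)
  also have "\<dots> = (\<integral>\<^sup>+x. \<integral>\<^sup>+y. F x y + G x y \<partial>lborel \<partial>lborel)"
    unfolding F_def G_def by (rule lborel_pair.Fubini') measurable
  also have "\<dots> = (\<integral>\<^sup>+x. indicator {p1..p2} x * line_sqnorm f x
      + indicator {p1..p2} x * line_sqnorm g (\<sigma> - x) \<partial>lborel)"
    unfolding line_sqnorm_def F_def G_def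
    by (intro nn_integral_cong, subst nn_integral_add) (auto simp: nn_integral_cmult)
  also have "\<dots> = (\<integral>\<^sup>+x. indicator {p1..p2} x * line_sqnorm f x \<partial>lborel)
      + (\<integral>\<^sup>+x. indicator {\<sigma> - p2..\<sigma> - p1} x * line_sqnorm g x \<partial>lborel)"
    unfolding reflect[symmetric] by (rule nn_integral_add) auto
  also have "\<dots> < \<infinity>"
    using nn_integral_line_sqnorm_interval_finite[OF f, of p1 p2]
      nn_integral_line_sqnorm_interval_finite[OF g, of "\<sigma> - p2" "\<sigma> - p1"] p
    by simp
  finally show ?thesis .
qed

lemma line_pairing_reflect_invariant:
  assumes f: "f \<in> bergman_space \<alpha>" and g: "g \<in> bergman_space \<alpha>"
    and p: "0 < p1" "p1 < p2" "p2 < \<sigma>"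
    and fin: "line_sqnorm f p1 < \<infinity>" "line_sqnorm f p2 < \<infinity>"
      "line_sqnorm g (\<sigma> - p1) < \<infinity>" "line_sqnorm g (\<sigma> - p2) < \<infinity>"
  shows "line_pairing f g p1 (\<sigma> - p1) = line_pairing f g p2 (\<sigma> - p2)"
proof -
  have hf: "f holomorphic_on RHP" and hg: "g holomorphic_on RHP"
    using f g bergman_space_holomorphic by auto
  define H where "H \<zeta> = f \<zeta> * (cnj \<circ> g \<circ> cnj) (of_real \<sigma> - \<zeta>)" for \<zeta>
  have "of_real \<sigma> - cnj (Complex x y) = Complex (\<sigma> - x) y" for x y
    by (simp add: complex_eq_iff)
  then have H: "H (Complex x y) = f (Complex x y) * cnj (g (Complex (\<sigma> - x) y))" for x y
    by (simp add: H_def)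
  have hG: "(cnj \<circ> g \<circ> cnj) holomorphic_on RHP"
    using hg open_RHP cnj_RHP by (intro holomorphic_on_compose_cnj_cnj) auto
  have "((cnj \<circ> g \<circ> cnj) \<circ> (\<lambda>\<zeta>. of_real \<sigma> - \<zeta>)) holomorphic_on {z. p1 \<le> Re z \<and> Re z \<le> p2}"
    by (rule holomorphic_on_compose_gen[OF _ hG])
      (use p in \<open>auto simp: RHP_def intro!: holomorphic_intros\<close>)
  then have "(\<lambda>\<zeta>. (cnj \<circ> g \<circ> cnj) (of_real \<sigma> - \<zeta>)) holomorphic_on {z. p1 \<le> Re z \<and> Re z \<le> p2}"
    by (simp add: comp_def)
  moreover have "f holomorphic_on {z. p1 \<le> Re z \<and> Re z \<le> p2}"
    using p by (intro holomorphic_on_subset[OF hf]) (auto simp: RHP_def)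
  ultimately have "H holomorphic_on {z. p1 \<le> Re z \<and> Re z \<le> p2}"
    unfolding H_def by (intro holomorphic_on_mult)
  moreover have "integrable lborel (\<lambda>y. H (Complex p y))" if "p = p1 \<or> p = p2" for p
    unfolding H using that p fin by (auto intro!: line_pairing_integrable_bound(1)[OF hf hg])
  ultimately have "(LINT y|lborel. H (Complex p1 y)) = (LINT y|lborel. H (Complex p2 y))"
    using nn_integral_strip_pairing_finite[OF f g, of p1 p2 \<sigma>] p
    by (intro vertical_line_integrals_eq_strip) (auto simp: H)
  then show ?thesis
    unfolding line_pairing_def H .
qed

section \<open>Translation by a positive real number\<close>

lemma line_sqnorm_midpoint_le:
  assumes f: "f \<in> bergman_space \<alpha>" and u: "0 < u" "u < s" and fs: "line_sqnorm f s < \<infinity>"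
  shows "2 * line_sqnorm f s \<le> line_sqnorm f u + line_sqnorm f (2 * s - u)"
proof (cases "line_sqnorm f u < \<infinity> \<and> line_sqnorm f (2 * s - u) < \<infinity>")
  case False
  then show ?thesis by (auto simp: less_top[symmetric])
next
  case True
  have hf: "f holomorphic_on RHP"
    using f bergman_space_holomorphic by auto
  have "line_pairing f f u (2 * s - u) = line_pairing f f s (2 * s - s)"
    by (rule line_pairing_reflect_invariant[OF f f]) (use u fs True in auto)
  then have "ennreal (cmod (line_pairing f f u (2 * s - u))) = line_sqnorm f s"
    using line_pairing_self[OF hf _ fs] u by simp
  moreover have "2 * ennreal (cmod (line_pairing f f u (2 * s - u))) \<le> line_sqnorm f u
      + line_sqnorm f (2 * s - u)"
    by (rule line_pairing_integrable_bound(2)[OF hf hf]) (use u True in auto)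
  ultimately show ?thesis by simp
qed

lemma line_sqnorm_le_window:
  assumes f: "f \<in> bergman_space \<alpha>" and r: "0 < r" and s: "r < s" "s \<le> 2 * r"
      and fs: "line_sqnorm f s < \<infinity>"
  shows "line_sqnorm f s \<le> ennreal (2 / r) * (\<integral>\<^sup>+x. indicator {r/2..4 * r} x * line_sqnorm f x \<partial>lborel)"
proof -
  have [measurable]: "line_sqnorm f \<in> borel_measurable borel"
    using f by (intro borel_measurable_line_sqnorm bergman_space_holomorphic)
  define A where "A = (\<integral>\<^sup>+x. indicator {r/2..4 * r} x * line_sqnorm f x \<partial>lborel)"
  have reflect: "(\<integral>\<^sup>+u. indicator {r/2..r} u * line_sqnorm f (2 * s - u) \<partial>lborel)
      = (\<integral>\<^sup>+u. indicator {2 * s - r..2 * s - r/2} u * line_sqnorm f u \<partial>lborel)"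
    using nn_integral_real_affine[of "\<lambda>u. indicator {2 * s - r..2 * s - r/2} u * line_sqnorm f u"
        "-1" "2 * s"]
    by (simp add: indicator_def conj_commute)
  \<comment> \<open>average the midpoint inequality over u in [r/2, r]\<close>
  have "ennreal r = ennreal 2 * ennreal (r / 2)"
    using r by (subst ennreal_mult[symmetric]) auto
  moreover have "(\<integral>\<^sup>+u. 2 * line_sqnorm f s * indicator {r/2..r} u \<partial>lborel)
      = 2 * line_sqnorm f s * ennreal (r / 2)"
    using r by (simp add: nn_integral_cmult_indicator)
  ultimately have "ennreal r * line_sqnorm f s
      = (\<integral>\<^sup>+u. 2 * line_sqnorm f s * indicator {r/2..r} u \<partial>lborel)"
    by (simp add: mult_ac)
  also have "\<dots> \<le> (\<integral>\<^sup>+u. indicator {r/2..r} u * line_sqnorm f u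
      + indicator {r/2..r} u * line_sqnorm f (2 * s - u) \<partial>lborel)"
    using line_sqnorm_midpoint_le[OF f _ _ fs] r s
    by (intro nn_integral_mono) (auto simp: indicator_def)
  also have "\<dots> = (\<integral>\<^sup>+u. indicator {r/2..r} u * line_sqnorm f u \<partial>lborel)
      + (\<integral>\<^sup>+u. indicator {2 * s - r..2 * s - r/2} u * line_sqnorm f u \<partial>lborel)"
    unfolding reflect[symmetric] by (rule nn_integral_add) auto
  also have "\<dots> \<le> A + A"
    unfolding A_def using r s by (intro add_mono nn_integral_mono) (auto simp: indicator_def)
  finally have "ennreal r * line_sqnorm f s \<le> 2 * A"
    by (simp add: mult_2)
  then have "ennreal (1 / r) * (ennreal r * line_sqnorm f s) \<le> ennreal (1 / r) * (2 * A)"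
    by (rule mult_left_mono) simp
  moreover have "ennreal (2 / r) = ennreal (1 / r) * ennreal 2"
    using r by (subst ennreal_mult[symmetric]) auto
  ultimately show ?thesis
    using r by (simp add: A_def mult.assoc[symmetric] ennreal_mult[symmetric])
qed

lemma line_sqnorm_translate:
  assumes "x > 0" "r \<ge> 0"
  shows "line_sqnorm (\<lambda>z. f (z + of_real r)) x = line_sqnorm f (x + r)"
proof -
  have "Complex x y + of_real r = Complex (x + r) y" for y
    by (simp add: complex_eq_iff)
  then show ?thesis
    using assms by (simp add: line_sqnorm_pos)
qed

lemma powr_le_mult_powr_add:
  fixes x r \<alpha> :: real
  assumes r: "r > 0" and x: "x \<ge> r"
  shows "x powr \<alpha> \<le> max 1 (2 powr (-\<alpha>)) * (x + r) powr \<alpha>"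
proof (cases "\<alpha> \<ge> 0")
  case True
  then have "x powr \<alpha> \<le> (x + r) powr \<alpha>"
    using r x by (intro powr_mono2) auto
  also have "\<dots> \<le> max 1 (2 powr (-\<alpha>)) * (x + r) powr \<alpha>"
    using mult_right_mono[of 1 "max 1 (2 powr (-\<alpha>))" "(x + r) powr \<alpha>"] by simp
  finally show ?thesis .
next
  case False
  then have "2 powr \<alpha> * x powr \<alpha> \<le> (x + r) powr \<alpha>"
    using r x by (subst powr_mult[symmetric]) (auto intro: powr_mono2')
  then have "x powr \<alpha> \<le> 2 powr (-\<alpha>) * (x + r) powr \<alpha>"
    by (simp add: powr_minus field_simps)
  also have "\<dots> \<le> max 1 (2 powr (-\<alpha>)) * (x + r) powr \<alpha>"
    by (intro mult_right_mono) auto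
  finally show ?thesis .
qed

lemma weighted_line_sqnorm_translate_le:
  assumes f: "f \<in> bergman_space \<alpha>" and r: "r > 0" and x: "x > 0" and fin: "line_sqnorm f (x + r) < \<infinity>"
  shows "ennreal (x powr \<alpha>) * line_sqnorm (\<lambda>z. f (z + of_real r)) x \<le>
      ennreal (max 1 (2 powr (-\<alpha>))) * (ennreal ((x + r) powr \<alpha>) * line_sqnorm f (x + r))
      + ennreal (2 / r) * (\<integral>\<^sup>+t. indicator {r/2..4 * r} t * line_sqnorm f t \<partial>lborel)
        * (indicator {0..r} x * ennreal (x powr \<alpha>))"
    (is "_ \<le> ennreal ?K * _ + ?C * _")
proof (cases "x \<ge> r")
  case True
  have "ennreal (x powr \<alpha>) \<le> ennreal ?K * ennreal ((x + r) powr \<alpha>)"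
    using powr_le_mult_powr_add[OF r True] by (simp add: ennreal_mult'[symmetric] ennreal_leI)
  then have "ennreal (x powr \<alpha>) * line_sqnorm f (x + r) \<le> ennreal ?K * (ennreal ((x
      + r) powr \<alpha>) * line_sqnorm f (x + r))"
    by (simp add: mult.assoc[symmetric] mult_right_mono)
  then show ?thesis
    using x r by (simp add: line_sqnorm_translate add_increasing2)
next
  case False
  then have "line_sqnorm f (x + r) \<le> ?C"
    using x r fin by (intro line_sqnorm_le_window[OF f r]) auto
  then have "ennreal (x powr \<alpha>) * line_sqnorm f (x + r)
      \<le> ?C * (indicator {0..r} x * ennreal (x powr \<alpha>))"
    using x False mult_left_mono[of "line_sqnorm f (x + r)" ?C "ennreal (x powr \<alpha>)"]
    by (simp add: mult.commute)
  then show ?thesis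
    using x r by (simp add: line_sqnorm_translate add_increasing)
qed

lemma bergman_space_translate_real:
  assumes f: "f \<in> bergman_space \<alpha>" and \<alpha>: "\<alpha> > -1" and r: "r > 0"
  shows "(\<lambda>z. f (z + of_real r)) \<in> bergman_space \<alpha>"
proof -
  have hf: "f holomorphic_on RHP"
    using f bergman_space_holomorphic by auto
  have hg: "(\<lambda>z. f (z + of_real r)) holomorphic_on RHP"
    using holomorphic_on_affine_RHP[OF hf, of 1 "of_real r"] r by simp
  have [measurable]: "line_sqnorm f \<in> borel_measurable borel"
    by (rule borel_measurable_line_sqnorm[OF hf])
  define K where "K = max 1 (2 powr (-\<alpha>))"
  define C where "C = ennreal (2 / r) * (\<integral>\<^sup>+t. indicator {r/2..4 * r} t * line_sqnorm f t \<partial>lborel)"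
  have "C < \<infinity>"
    unfolding C_def using nn_integral_line_sqnorm_interval_finite[OF f, of "r/2" "4 * r"] r
    by (simp add: ennreal_mult_less_top)
  have "AE x in lborel. r + 1 * x > 0 \<longrightarrow> line_sqnorm f (r + 1 * x) < \<infinity>"
    using AE_line_sqnorm_finite[OF f] by (intro AE_borel_affine) auto
  then have "AE x in lborel. ennreal (x powr \<alpha>) * line_sqnorm (\<lambda>z. f (z + of_real r)) x \<le>
      ennreal K * (ennreal ((x + r) powr \<alpha>) * line_sqnorm f (x + r))
          + C * (indicator {0..r} x * ennreal (x powr \<alpha>))"
  proof eventually_elim
    case (elim x)
    show ?case
    proof (cases "x > 0")
      case True
      then show ?thesis
        unfolding K_def C_def using elim r by (intro weighted_line_sqnorm_translate_le[OF f r])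
          (auto simp: add.commute)
    qed (simp add: line_sqnorm_nonpos)
  qed
  then have "(\<integral>\<^sup>+x. ennreal (x powr \<alpha>) * line_sqnorm (\<lambda>z. f (z + of_real r)) x \<partial>lborel) \<le>
      ennreal K * (\<integral>\<^sup>+x. ennreal ((x + r) powr \<alpha>) * line_sqnorm f (x + r) \<partial>lborel)
      + C * (\<integral>\<^sup>+x. indicator {0..r} x * ennreal (x powr \<alpha>) \<partial>lborel)"
    by (subst nn_integral_cmult[symmetric], simp, subst nn_integral_cmult[symmetric], simp,
        subst nn_integral_add[symmetric]) (auto intro: nn_integral_mono_AE)
  also have "(\<integral>\<^sup>+x. ennreal ((x + r) powr \<alpha>) * line_sqnorm f (x + r) \<partial>lborel)
      = (\<integral>\<^sup>+x. ennreal (x powr \<alpha>) * line_sqnorm f x \<partial>lborel)"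
    using nn_integral_real_affine[of "\<lambda>x. ennreal (x powr \<alpha>) * line_sqnorm f x" 1 r]
    by (simp add: add.commute)
  also have "ennreal K * \<dots> + C * (\<integral>\<^sup>+x. indicator {0..r} x * ennreal (x powr \<alpha>) \<partial>lborel) < \<infinity>"
    using nn_integral_weighted_line_sqnorm_finite[OF f] \<open>C
        < \<infinity>\<close> nn_integral_powr_Icc_finite[OF \<alpha>, of r] r
    by (simp add: ennreal_mult_less_top)
  finally show ?thesis
    using bergman_space_iff_line_sqnorm[OF hg] by simp
qed

lemma bergman_inner_translate_real:
  assumes f: "f \<in> bergman_space \<alpha>" and g: "g \<in> bergman_space \<alpha>" and \<alpha>: "\<alpha> > -1" and r: "r > 0"
  shows "bergman_inner \<alpha> (\<lambda>z. f (z + of_real r)) g = bergman_inner \<alpha> f (\<lambda>z. g (z + of_real r))"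
proof -
  let ?tf = "\<lambda>z. f (z + of_real r)" and ?tg = "\<lambda>z. g (z + of_real r)"
  have tf: "?tf \<in> bergman_space \<alpha>" and tg: "?tg \<in> bergman_space \<alpha>"
    using bergman_space_translate_real[OF _ \<alpha> r] f g by auto
  have shift: "Complex x y + of_real r = Complex (x + r) y" for x y
    by (simp add: complex_eq_iff)
  have "AE x in lborel. (LINT y|lborel. bergman_integrand \<alpha> ?tf g (Complex x y))
      = (LINT y|lborel. bergman_integrand \<alpha> f ?tg (Complex x y))"
    using AE_line_sqnorm_finite[OF f] AE_line_sqnorm_finite[OF g]
      AE_line_sqnorm_finite[OF tf] AE_line_sqnorm_finite[OF tg]
  proof eventually_elim
    case (elim x)
    show ?case
    proof (cases "x > 0")
      case True
      then have "line_pairing f g x (x + r) = line_pairing f g (x + r) x"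
        using line_pairing_reflect_invariant[OF f g, of x "x + r" "2 * x + r"] elim r
        by (simp add: line_sqnorm_translate)
      then show ?thesis
        using True by (simp add: bergman_integrand_def RHP_def shift line_pairing_def)
    qed (simp add: bergman_integrand_def RHP_def)
  qed
  then have "(LINT x|lborel. LINT y|lborel. bergman_integrand \<alpha> ?tf g (Complex x y))
      = (LINT x|lborel. LINT y|lborel. bergman_integrand \<alpha> f ?tg (Complex x y))"
    using integral_lborel_complex(1)[OF integrable_bergman_integrand[OF tf g]]
      integral_lborel_complex(1)[OF integrable_bergman_integrand[OF f tg]]
    by (intro integral_cong_AE) auto
  then show ?thesis
    unfolding bergman_inner_eq_integral
    by (simp add: integral_lborel_complex(2)[OF integrable_bergman_integrand[OF tf g]]
                  integral_lborel_complex(2)[OF integrable_bergman_integrand[OF f tg]])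
qed

section \<open>Dilations and translations\<close>

lemma bergman_space_affine:
  assumes f: "f \<in> bergman_space \<alpha>" and c: "c > 0" and t: "Re t = 0"
  shows "(\<lambda>z. f (of_real c * z + t)) \<in> bergman_space \<alpha>"
proof -
  have pt: "t + c *\<^sub>R z = of_real c * z + t" for z
    by (simp add: scaleR_conv_of_real)
  define G where "G u = indicator RHP u *\<^sub>R ((cmod (f u))\<^sup>2 * Re u powr \<alpha>)" for u
  have iG: "integrable lborel G"
    using f unfolding bergman_space_def set_integrable_def G_def[abs_def] by auto
  then have [measurable]: "G \<in> borel_measurable borel"
    by auto
  have "(\<integral>\<^sup>+z. ennreal (norm (G z)) \<partial>lborel) = ennreal (c\<^sup>2) * (\<integral>\<^sup>+z. ennreal (norm (G (t
      + c *\<^sub>R z))) \<partial>lborel)"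
    using c by (intro nn_integral_lborel_complex_affine) auto
  moreover have "(\<integral>\<^sup>+z. ennreal (norm (G z)) \<partial>lborel) < \<infinity>"
    using iG by (simp add: integrable_iff_bounded)
  ultimately have "(\<integral>\<^sup>+z. ennreal (norm (G (t + c *\<^sub>R z))) \<partial>lborel) < \<infinity>"
    using c by (auto simp: ennreal_mult_less_top ennreal_mult_eq_top_iff top.not_eq_extremum)
  then have "integrable lborel (\<lambda>z. c powr (-\<alpha>) * G (t + c *\<^sub>R z))"
    by (intro integrable_mult_right) (simp add: integrable_iff_bounded)
  moreover have "indicator RHP z *\<^sub>R ((cmod (f (of_real c * z + t)))\<^sup>2 * Re z powr \<alpha>)
      = c powr (-\<alpha>) * G (t + c *\<^sub>R z)" for z
  proof (cases "Re z > 0")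
    case True
    have "c powr (-\<alpha>) * (c * Re z) powr \<alpha> = Re z powr \<alpha>"
      using c True by (simp add: powr_mult powr_minus field_simps)
    then show ?thesis
      using True c t by (simp add: G_def pt RHP_def indicator_def)
  qed (use c t in \<open>simp add: G_def pt RHP_def indicator_def zero_less_mult_iff\<close>)
  ultimately have "set_integrable lborel RHP (\<lambda>z. (cmod (f (of_real c * z + t)))\<^sup>2 * Re z powr \<alpha>)"
    unfolding set_integrable_def by simp
  then show ?thesis
    using holomorphic_on_affine_RHP[OF bergman_space_holomorphic[OF f] c] t
    unfolding bergman_space_def by auto
qed

lemma bergman_space_affine_inverse:
  assumes g: "g \<in> bergman_space \<alpha>" and c: "c > 0" and t: "Re t = 0"
  shows "(\<lambda>z. g ((z - t) / of_real c)) \<in> bergman_space \<alpha>"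
proof -
  have "(\<lambda>z. g (of_real (1 / c) * z + (- t / of_real c))) \<in> bergman_space \<alpha>"
    using c t by (intro bergman_space_affine[OF g]) auto
  then show ?thesis
    by (simp add: diff_divide_distrib)
qed

lemma bergman_inner_affine:
  assumes f: "f \<in> bergman_space \<alpha>" and g: "g \<in> bergman_space \<alpha>" and c: "c > 0" and t: "Re t = 0"
  shows "bergman_inner \<alpha> (\<lambda>z. f (of_real c * z + t)) g =
     of_real (c powr (-2-\<alpha>)) * bergman_inner \<alpha> f (\<lambda>z. g ((z - t) / of_real c))"
proof -
  let ?f = "\<lambda>z. f (of_real c * z + t)" and ?g = "\<lambda>z. g ((z - t) / of_real c)"
  have pt: "t + c *\<^sub>R z = of_real c * z + t" for z
    by (simp add: scaleR_conv_of_real)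
  have "integrable lborel (bergman_integrand \<alpha> f ?g)"
    by (intro integrable_bergman_integrand f bergman_space_affine_inverse g c t)
  then have [measurable]: "bergman_integrand \<alpha> f ?g \<in> borel_measurable borel"
    by auto
  have pointwise: "bergman_integrand \<alpha> f ?g (t + c *\<^sub>R z)
      = of_real (c powr \<alpha>) * bergman_integrand \<alpha> ?f g z" for z
  proof (cases "Re z > 0")
    case True
    have "(of_real c * z + t - t) / of_real c = z" "(c * Re z) powr \<alpha> = c powr \<alpha> * Re z powr \<alpha>"
      using c True by (simp_all add: powr_mult)
    then show ?thesis
      using True c t by (simp add: bergman_integrand_def pt RHP_def indicator_def
          of_real_mult[symmetric] del: of_real_mult)
  qed (use c t in \<open>simp add: bergman_integrand_def pt RHP_def indicator_def zero_less_mult_iff\<close>)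
  have "integral\<^sup>L lborel (bergman_integrand \<alpha> f ?g)
      = of_real (c\<^sup>2) * (LINT z|lborel. bergman_integrand \<alpha> f ?g (t + c *\<^sub>R z))"
    using c by (intro integral_lborel_complex_affine) auto
  also have "\<dots> = of_real (c\<^sup>2 * c powr \<alpha>) * integral\<^sup>L lborel (bergman_integrand \<alpha> ?f g)"
    unfolding pointwise by simp
  moreover have "c powr (-2-\<alpha>) * (c\<^sup>2 * c powr \<alpha>) = 1"
  proof -
    have "c\<^sup>2 * c powr \<alpha> = c powr (2 + \<alpha>)"
      using c by (simp add: powr_add powr_numeral)
    then show ?thesis
      using c by (simp add: powr_add[symmetric])
  qed
  ultimately show ?thesis
    unfolding bergman_inner_eq_integral
    by (simp add: mult.assoc[symmetric] of_real_mult[symmetric] del: of_real_mult)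
qed

lemma bergman_space_translate:
  assumes f: "f \<in> bergman_space \<alpha>" and \<alpha>: "\<alpha> > -1" and b: "Re b \<ge> 0"
  shows "(\<lambda>z. f (z + b)) \<in> bergman_space \<alpha>"
proof -
  have h: "(\<lambda>z. f (z + \<i> * of_real (Im b))) \<in> bergman_space \<alpha>"
    using bergman_space_affine[OF f, of 1 "\<i> * of_real (Im b)"] by simp
  have split: "z + b = z + of_real (Re b) + \<i> * of_real (Im b)" for z
    by (simp add: complex_eq_iff)
  show ?thesis
  proof (cases "Re b = 0")
    case True
    then show ?thesis using h by (simp add: split)
  next
    case False
    then show ?thesis
      using bergman_space_translate_real[OF h \<alpha>, of "Re b"] b by (simp add: split)
  qed
qed

lemma bergman_inner_translate:
  assumes f: "f \<in> bergman_space \<alpha>" and g: "g \<in> bergman_space \<alpha>" and \<alpha>: "\<alpha> > -1" and b: "Re b \<ge> 0"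
  shows "bergman_inner \<alpha> (\<lambda>z. f (z + b)) g = bergman_inner \<alpha> f (\<lambda>z. g (z + cnj b))"
proof -
  let ?h = "\<lambda>z. f (z + \<i> * of_real (Im b))" and ?tg = "\<lambda>z. g (z + of_real (Re b))"
  have h: "?h \<in> bergman_space \<alpha>"
    using bergman_space_affine[OF f, of 1 "\<i> * of_real (Im b)"] by simp
  have tg: "?tg \<in> bergman_space \<alpha>"
    using bergman_space_translate[OF g \<alpha>, of "of_real (Re b)"] b by simp
  have "(\<lambda>z. f (z + b)) = (\<lambda>z. ?h (z + of_real (Re b)))"
    by (intro ext arg_cong[where f=f]) (simp add: complex_eq_iff)
  moreover have "(\<lambda>z. g (z + cnj b)) = (\<lambda>z. ?tg ((z - \<i> * of_real (Im b)) / of_real 1))"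
    by (intro ext arg_cong[where f=g]) (simp add: complex_eq_iff)
  moreover have "bergman_inner \<alpha> (\<lambda>z. ?h (z + of_real (Re b))) g = bergman_inner \<alpha> ?h ?tg"
    using bergman_inner_translate_real[OF h g \<alpha>, of "Re b"] b by (cases "Re b = 0") auto
  moreover have "bergman_inner \<alpha> ?h ?tg
      = bergman_inner \<alpha> f (\<lambda>z. ?tg ((z - \<i> * of_real (Im b)) / of_real 1))"
    using bergman_inner_affine[OF f tg, of 1 "\<i> * of_real (Im b)"] by simp
  ultimately show ?thesis
    by simp
qed

section \<open>The adjoint of an affine composition operator\<close>

definition affine_comp_adjoint :: "real \<Rightarrow> real \<Rightarrow> complex
    \<Rightarrow> (complex \<Rightarrow> complex) \<Rightarrow> complex \<Rightarrow> complex" where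
  "affine_comp_adjoint \<alpha> a b g = (\<lambda>z. of_real (a powr (-2-\<alpha>)) * g ((z + cnj b) / of_real a))"

lemma bergman_space_comp_affine:
  assumes f: "f \<in> bergman_space \<alpha>" and \<alpha>: "\<alpha> > -1" and a: "a > 0" and b: "Re b \<ge> 0"
  shows "comp_op (\<lambda>w. of_real a * w + b) f \<in> bergman_space \<alpha>"
proof -
  have "(\<lambda>z. (\<lambda>w. f (w + b)) (of_real a * z + 0)) \<in> bergman_space \<alpha>"
    by (rule bergman_space_affine[OF bergman_space_translate[OF f \<alpha> b] a]) simp
  then show ?thesis
    by (simp add: comp_op_def comp_def)
qed

lemma bergman_space_affine_comp_adjoint:
  assumes g: "g \<in> bergman_space \<alpha>" and \<alpha>: "\<alpha> > -1" and a: "a > 0" and b: "Re b \<ge> 0"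
  shows "affine_comp_adjoint \<alpha> a b g \<in> bergman_space \<alpha>"
proof -
  have "(\<lambda>z. g ((z - 0) / of_real a)) \<in> bergman_space \<alpha>"
    by (rule bergman_space_affine_inverse[OF g a]) simp
  from bergman_space_translate[OF this \<alpha>, of "cnj b"] b
  show ?thesis
    unfolding affine_comp_adjoint_def by (auto intro: bergman_space_scale)
qed

lemma is_adjoint_comp_affine:
  assumes \<alpha>: "\<alpha> > -1" and a: "a > 0" and b: "Re b \<ge> 0"
  shows "is_adjoint_on \<alpha> (comp_op (\<lambda>w. of_real a * w + b)) (affine_comp_adjoint \<alpha> a b)"
  unfolding is_adjoint_on_def
proof (intro conjI ballI)
  fix f g assume f: "f \<in> bergman_space \<alpha>" and g: "g \<in> bergman_space \<alpha>"
  show "affine_comp_adjoint \<alpha> a b g \<in> bergman_space \<alpha>"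
    by (rule bergman_space_affine_comp_adjoint[OF g \<alpha> a b])
  have g': "(\<lambda>z. g ((z - 0) / of_real a)) \<in> bergman_space \<alpha>"
    by (rule bergman_space_affine_inverse[OF g a]) simp
  have "bergman_inner \<alpha> (comp_op (\<lambda>w. of_real a * w + b) f) g
      = of_real (a powr (-2-\<alpha>)) * bergman_inner \<alpha> (\<lambda>w. f (w + b)) (\<lambda>z. g ((z - 0) / of_real a))"
    unfolding comp_op_def comp_def
    using bergman_inner_affine[OF bergman_space_translate[OF f \<alpha> b] g a, of 0] by simp
  also have "\<dots> = of_real (a powr (-2-\<alpha>)) * bergman_inner \<alpha> f (\<lambda>z. g ((z + cnj b - 0) / of_real a))"
    using bergman_inner_translate[OF f g' \<alpha> b] by simp
  also have "\<dots> = bergman_inner \<alpha> f (affine_comp_adjoint \<alpha> a b g)"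
    unfolding affine_comp_adjoint_def bergman_inner_scale_right by simp
  finally show "bergman_inner \<alpha> (comp_op (\<lambda>w. of_real a * w + b) f) g
      = bergman_inner \<alpha> f (affine_comp_adjoint \<alpha> a b g)" .
qed

lemma comp_op_affine_comp_adjoint:
  assumes "a > 0"
  shows "comp_op (\<lambda>w. of_real a * w + b) (affine_comp_adjoint \<alpha> a b f) z
    = of_real (a powr (-2-\<alpha>)) * f (z + of_real (2 * Re b / a))"
proof -
  have "(of_real a * z + b + cnj b) / of_real a = z + of_real (2 * Re b / a)"
    using assms by (simp add: complex_eq_iff field_simps)
  then show ?thesis
    by (simp add: comp_op_def affine_comp_adjoint_def)
qed

lemma affine_comp_adjoint_comp_op:
  assumes "a > 0"
  shows "affine_comp_adjoint \<alpha> a b (comp_op (\<lambda>w. of_real a * w + b) f) z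
    = of_real (a powr (-2-\<alpha>)) * f (z + of_real (2 * Re b))"
proof -
  have "of_real a * ((z + cnj b) / of_real a) + b = z + of_real (2 * Re b)"
    using assms by (simp add: complex_eq_iff field_simps)
  then show ?thesis
    by (simp add: comp_op_def affine_comp_adjoint_def)
qed

section \<open>Uniqueness of adjoints\<close>

lemma bergman_inner_self_eq_0_imp_zero:
  assumes h: "h \<in> bergman_space \<alpha>" and zero: "bergman_inner \<alpha> h h = 0" and z: "z \<in> RHP"
  shows "h z = 0"
proof (rule ccontr)
  assume "h z \<noteq> 0"
  define u where "u w = (cmod (h w))\<^sup>2 * Re w powr \<alpha>" for w
  have "continuous_on RHP u"
    using holomorphic_on_imp_continuous_on[OF bergman_space_holomorphic[OF h]]
    by (auto simp: u_def RHP_def intro!: continuous_intros)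
  then have "open (RHP \<inter> u -` {0<..})"
    using open_RHP by (intro continuous_open_preimage) auto
  moreover have "z \<in> RHP \<inter> u -` {0<..}"
    using \<open>h z \<noteq> 0\<close> z by (simp add: u_def RHP_def)
  ultimately obtain r where r: "r > 0" "ball z r \<subseteq> RHP \<inter> u -` {0<..}"
    by (meson open_contains_ball)
  define v where "v w = (cmod (zero_outside_RHP h w))\<^sup>2 * Re w powr \<alpha>" for w
  have "bergman_integrand \<alpha> h h = (\<lambda>w. of_real (v w))"
    by (auto simp: fun_eq_iff bergman_integrand_def v_def zero_outside_RHP_def indicator_def
        complex_norm_square[symmetric])
  then have "integral\<^sup>L lborel v = 0"
    using zero unfolding bergman_inner_eq_integral by simp
  then have "AE w in lborel. v w = 0"
    using integrable_bergman_sqnorm[OF h] by (subst (asm) integral_nonneg_eq_0_iff_AE)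
      (auto simp: v_def[abs_def])
  then have "AE w in lborel. w \<notin> ball z r"
    by eventually_elim (use r in \<open>force simp: u_def v_def zero_outside_RHP_def\<close>)
  then have "emeasure lborel (ball z r) = 0"
    by (subst AE_iff_measurable[of "ball z r" lborel "\<lambda>w. w \<notin> ball z r", symmetric]) auto
  with content_ball_pos[OF r(1), of z] show False
    by (simp add: measure_def)
qed

lemma is_adjoint_on_unique:
  assumes S0: "is_adjoint_on \<alpha> T S0" and S1: "is_adjoint_on \<alpha> T S1"
    and g: "g \<in> bergman_space \<alpha>" and z: "z \<in> RHP"
  shows "S0 g z = S1 g z"
proof -
  have s0: "S0 g \<in> bergman_space \<alpha>" and s1: "S1 g \<in> bergman_space \<alpha>"
    using S0 S1 g unfolding is_adjoint_on_def by auto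
  let ?d = "\<lambda>w. S0 g w - S1 g w"
  have d: "?d \<in> bergman_space \<alpha>"
    by (rule bergman_space_diff[OF s0 s1])
  have "bergman_inner \<alpha> ?d ?d = bergman_inner \<alpha> ?d (S0 g) - bergman_inner \<alpha> ?d (S1 g)"
    by (rule bergman_inner_diff_right[OF d s0 s1])
  also have "\<dots> = bergman_inner \<alpha> (T ?d) g - bergman_inner \<alpha> (T ?d) g"
    using S0 S1 g d unfolding is_adjoint_on_def by simp
  finally have "?d z = 0"
    using bergman_inner_self_eq_0_imp_zero[OF d _ z] by simp
  then show ?thesis by simp
qed

section \<open>A test function\<close>

lemma norm_inverse_power_le:
  fixes x y :: real
  assumes x: "x > 0" and n: "n \<ge> 1"
  shows "(cmod (inverse ((Complex x y + 1) ^ n)))\<^sup>2 \<le> inverse ((x + 1) ^ (2 * n - 2)) * inverse (1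
      + y\<^sup>2)"
proof -
  define A where "A = (x + 1)\<^sup>2 + y\<^sup>2"
  define X where "X = (x + 1)\<^sup>2"
  have "(cmod (Complex x y + 1))\<^sup>2 = A"
    by (simp add: A_def cmod_power2)
  moreover have "(cmod (inverse ((Complex x y + 1) ^ n)))\<^sup>2 = inverse (((cmod (Complex x y
      + 1))\<^sup>2) ^ n)"
    by (simp add: norm_inverse norm_power power_inverse flip: power_mult) (simp add: mult.commute)
  ultimately have norm_eq: "(cmod (inverse ((Complex x y + 1) ^ n)))\<^sup>2 = inverse (A ^ n)"
    by simp
  have "X \<ge> 1" "X \<le> A"
    using x by (simp_all add: X_def A_def one_le_power)
  then have "X ^ (n - 1) * (1 + y\<^sup>2) \<le> A ^ (n - 1) * A"
    by (intro mult_mono power_mono) (auto simp: A_def X_def)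
  also have "A ^ (n - 1) * A = A ^ n"
    using n by (metis Suc_diff_1 less_le_trans power_Suc2 zero_less_one)
  finally have "inverse (A ^ n) \<le> inverse (X ^ (n - 1) * (1 + y\<^sup>2))"
    using \<open>X \<ge> 1\<close> by (intro le_imp_inverse_le) (auto intro!: mult_pos_pos add_pos_nonneg)
  moreover have "X ^ (n - 1) = (x + 1) ^ (2 * n - 2)"
  proof -
    have "2 * n - 2 = 2 * (n - 1)" by simp
    then show ?thesis by (simp add: X_def power_mult)
  qed
  ultimately show ?thesis
    unfolding norm_eq by (simp add: inverse_mult_distrib)
qed

lemma line_sqnorm_inverse_power_le:
  assumes x: "x > 0" and n: "n \<ge> 1"
  shows "line_sqnorm (\<lambda>w. inverse ((w + 1) ^ n)) x
    \<le> ennreal (inverse ((x + 1) ^ (2 * n - 2))) * (\<integral>\<^sup>+y. ennreal (inverse (1 + y\<^sup>2)) \<partial>lborel)"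
proof -
  have "line_sqnorm (\<lambda>w. inverse ((w + 1) ^ n)) x
      \<le> (\<integral>\<^sup>+y. ennreal (inverse ((x + 1) ^ (2 * n - 2))) * ennreal (inverse (1 + y\<^sup>2)) \<partial>lborel)"
    unfolding line_sqnorm_pos[OF x] using norm_inverse_power_le[OF x n] x
    by (intro nn_integral_mono) (simp add: ennreal_mult'[symmetric] ennreal_leI)
  then show ?thesis
    by (simp add: nn_integral_cmult)
qed

lemma powr_mult_inverse_power_le:
  fixes x \<alpha> :: real
  assumes x: "x > 0"
  shows "x powr \<alpha> * inverse ((x + 1) ^ k)
    \<le> indicator {0..1} x * x powr \<alpha> + indicator {1..} x * x powr (\<alpha> - real k)"
proof (cases "x \<le> 1")
  case True
  have "inverse ((x + 1) ^ k) \<le> 1"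
    using x by (simp add: inverse_le_1_iff one_le_power)
  then have "x powr \<alpha> * inverse ((x + 1) ^ k) \<le> indicator {0..1} x * x powr \<alpha>"
    using True x mult_left_mono[of "inverse ((x + 1) ^ k)" 1 "x powr \<alpha>"]
    by (simp add: indicator_def)
  then show ?thesis
    by (rule add_increasing2[rotated]) simp
next
  case False
  have "inverse ((x + 1) ^ k) \<le> x powr (- real k)"
    using x by (simp add: powr_minus powr_realpow le_imp_inverse_le power_mono)
  then have "x powr \<alpha> * inverse ((x + 1) ^ k) \<le> x powr \<alpha> * x powr (- real k)"
    by (rule mult_left_mono) simp
  then show ?thesis
    using False by (simp add: indicator_def powr_add[symmetric])
qed

lemma bergman_space_inverse_power:
  assumes \<alpha>: "\<alpha> > -1" and n: "real n \<ge> \<alpha> + 3"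
  shows "(\<lambda>w. inverse ((w + 1) ^ n)) \<in> bergman_space \<alpha>"
proof -
  let ?f = "\<lambda>w. inverse ((w + 1) ^ n)"
  have n1: "n \<ge> 1"
    using n \<alpha> by linarith
  define k where "k = 2 * n - 2"
  have k: "\<alpha> - real k < -1"
    using n n1 by (simp add: k_def of_nat_diff)
  have "w + 1 \<noteq> 0" if "w \<in> RHP" for w
    using that by (auto simp: RHP_def complex_eq_iff)
  then have hol: "?f holomorphic_on RHP"
    by (auto intro!: holomorphic_intros)
  define P where "P = (\<integral>\<^sup>+y. ennreal (inverse (1 + y\<^sup>2)) \<partial>lborel)"
  have "P < \<infinity>"
    using integrable_inverse_1_plus_square
    by (simp add: P_def set_integrable_def integrable_iff_bounded)
  have "ennreal (x powr \<alpha>) * line_sqnorm ?f x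
      \<le> P * (indicator {0..1} x * ennreal (x powr \<alpha>)
          + indicator {1..} x * ennreal (x powr (\<alpha> - real k)))" for x
  proof (cases "x > 0")
    case True
    have "ennreal (x powr \<alpha>) * line_sqnorm ?f x \<le> ennreal (x powr \<alpha>) * (ennreal (inverse ((x
        + 1) ^ k)) * P)"
      unfolding P_def k_def by (intro mult_left_mono line_sqnorm_inverse_power_le True n1) simp
    also have "\<dots> = P * ennreal (x powr \<alpha> * inverse ((x + 1) ^ k))"
      using True by (simp add: ennreal_mult mult_ac)
    also have "\<dots> \<le> P * ennreal (indicator {0..1} x * x powr \<alpha>
        + indicator {1..} x * x powr (\<alpha> - real k))"
      by (intro mult_left_mono ennreal_leI powr_mult_inverse_power_le True) simp
    also have "\<dots> = P * (indicator {0..1} x * ennreal (x powr \<alpha>)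
        + indicator {1..} x * ennreal (x powr (\<alpha> - real k)))"
      by (simp add: indicator_def)
    finally show ?thesis .
  qed (simp add: line_sqnorm_nonpos)
  then have "(\<integral>\<^sup>+x. ennreal (x powr \<alpha>) * line_sqnorm ?f x \<partial>lborel)
      \<le> P * ((\<integral>\<^sup>+x. indicator {0..1} x * ennreal (x powr \<alpha>) \<partial>lborel)
             + (\<integral>\<^sup>+x. indicator {1..} x * ennreal (x powr (\<alpha> - real k)) \<partial>lborel))"
    by (subst nn_integral_add[symmetric], simp, simp, subst nn_integral_cmult[symmetric], simp)
       (intro nn_integral_mono)
  also have "\<dots> < \<infinity>"
    using \<open>P < \<infinity>\<close> nn_integral_powr_Icc_finite[OF \<alpha>, of 1] nn_integral_powr_atLeast_finite[OF k, of 1]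
    by (simp add: ennreal_mult_less_top)
  finally show ?thesis
    using bergman_space_iff_line_sqnorm[OF hol] by simp
qed

lemma inverse_power_eq_imp_eq:
  fixes s t :: real
  assumes eq: "inverse ((of_real s + 1) ^ n) = (inverse ((of_real t + 1) ^ n) :: complex)"
    and "s \<ge> 0" "t \<ge> 0" "n > 0"
  shows "s = t"
proof -
  have "complex_of_real ((s + 1) ^ n) = complex_of_real ((t + 1) ^ n)"
    using eq by simp
  then have "(s + 1) ^ n = (t + 1) ^ n"
    by (simp only: of_real_eq_iff)
  then show ?thesis
    using power_eq_imp_eq_base[of "s + 1" n "t + 1"] assms(2-4) by simp
qed

section \<open>Normality\<close>

lemma normal_comp_op_commutes_with_adjoint:
  assumes N: "normal_op_on \<alpha> (comp_op \<phi>)" and S: "is_adjoint_on \<alpha> (comp_op \<phi>) S"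
    and \<phi>: "\<phi> ` RHP \<subseteq> RHP" and f: "f \<in> bergman_space \<alpha>" and z: "z \<in> RHP"
  shows "comp_op \<phi> (S f) z = S (comp_op \<phi> f) z"
proof -
  obtain S0 where S0: "is_adjoint_on \<alpha> (comp_op \<phi>) S0"
    and comm: "\<forall>f\<in>bergman_space \<alpha>. \<forall>z\<in>RHP. comp_op \<phi> (S0 f) z = S0 (comp_op \<phi> f) z"
    using N unfolding normal_op_on_def by blast
  have "comp_op \<phi> f \<in> bergman_space \<alpha>"
    using N f unfolding normal_op_on_def by blast
  then have "S0 (comp_op \<phi> f) z = S (comp_op \<phi> f) z"
    by (rule is_adjoint_on_unique[OF S0 S _ z])
  moreover have "S0 f (\<phi> z) = S f (\<phi> z)"
    using is_adjoint_on_unique[OF S0 S f] \<phi> z by blast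
  ultimately show ?thesis
    using comm f z by (simp add: comp_op_def)
qed

lemma normal_affine_comp_op_translations_eq:
  assumes N: "normal_op_on \<alpha> (comp_op (\<lambda>w. of_real a * w + b))"
    and \<alpha>: "\<alpha> > -1" and a: "a > 0" and b: "Re b \<ge> 0"
  shows "2 * Re b / a = 2 * Re b"
proof -
  let ?T = "comp_op (\<lambda>w. of_real a * w + b)" and ?S = "affine_comp_adjoint \<alpha> a b"
  define n where "n = nat \<lceil>\<alpha>\<rceil> + 3"
  let ?f = "\<lambda>w::complex. inverse ((w + 1) ^ n)"
  have f: "?f \<in> bergman_space \<alpha>"
    using bergman_space_inverse_power \<alpha> real_nat_ceiling_ge[of \<alpha>] by (simp add: n_def)
  have "(\<lambda>w. of_real a * w + b) ` RHP \<subseteq> RHP"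
    using a b by (auto simp: RHP_def add_pos_nonneg)
  then have "?T (?S ?f) 1 = ?S (?T ?f) 1"
    using normal_comp_op_commutes_with_adjoint[OF N is_adjoint_comp_affine[OF \<alpha> a b] _ f]
    by (simp add: RHP_def)
  then have "?f (of_real (1 + 2 * Re b / a)) = ?f (of_real (1 + 2 * Re b))"
    using a by (simp add: comp_op_affine_comp_adjoint affine_comp_adjoint_comp_op)
  then have "1 + 2 * Re b / a = 1 + 2 * Re b"
    by (rule inverse_power_eq_imp_eq) (use a b in \<open>auto simp: n_def\<close>)
  then show ?thesis
    by simp
qed

theorem mainTheorem7:
  fixes \<alpha> a :: real and b :: complex
  assumes "\<alpha> > -1" and "a > 0" and "Re b \<ge> 0"
  shows "normal_op_on \<alpha> (comp_op (\<lambda>w. of_real a * w + b)) \<longleftrightarrow> a = 1 \<or> Re b = 0"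
proof
  assume "normal_op_on \<alpha> (comp_op (\<lambda>w. of_real a * w + b))"
  with normal_affine_comp_op_translations_eq assms have "2 * Re b / a = 2 * Re b"
    by blast
  then show "a = 1 \<or> Re b = 0"
    using assms(2) by (auto simp: field_simps)
next
  let ?T = "comp_op (\<lambda>w. of_real a * w + b)" and ?S = "affine_comp_adjoint \<alpha> a b"
  assume "a = 1 \<or> Re b = 0"
  then have "?T (?S f) z = ?S (?T f) z" for f z
    using assms(2) by (auto simp: comp_op_affine_comp_adjoint affine_comp_adjoint_comp_op)
  then show "normal_op_on \<alpha> ?T"
    unfolding normal_op_on_def using bergman_space_comp_affine is_adjoint_comp_affine assms by blast
qed

end
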